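(* Let $\mathcal{F}$ be the class of planar graphs of maximum degree at most $4$, and let $G \in \mathcal{F}$ be a graph with $\chi_2(G) > 12$ that minimizes the pair $(|V(G)|, |E(G)|)$ (lexicographically) among all graphs of $\mathcal{F}$ with $\chi_2 > 12$, with a fixed planar embedding. Then $G$ does not contain a $3$-vertex incident to a $3$-face.
   Context: All graphs are finite, without loops or parallel edges. A distance-$2$ coloring of a graph is an assignment of colors to its vertices such that any two distinct vertices at distance at most $2$ receive different colors; $\chi_2(G)$ is the minimum number of colors in a distance-$2$ coloring of $G$. A $d$-vertex is a vertex of degree $d$. The degree of a face is the number of edges incident to it, counted with multiplicity; a $d$-face is a face of degree $d$. A vertex is incident to a face if it lies on its boundary. *)

theory Defs
  imports Main
begin

definition simple_graph :: "'a set \<Rightarrow> 'a set set \<Rightarrow> bool" where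
  "simple_graph V E \<longleftrightarrow> finite V \<and> (\<forall>e\<in>E. e \<subseteq> V \<and> card e = 2)"

definition adj :: "'a set set \<Rightarrow> 'a \<Rightarrow> 'a \<Rightarrow> bool" where
  "adj E u v \<longleftrightarrow> {u, v} \<in> E"

definition degree :: "'a set set \<Rightarrow> 'a \<Rightarrow> nat" where
  "degree E v = card {u. {u, v} \<in> E}"

definition max_degree_le :: "'a set \<Rightarrow> 'a set set \<Rightarrow> nat \<Rightarrow> bool" where
  "max_degree_le V E k \<longleftrightarrow> (\<forall>v\<in>V. degree E v \<le> k)"

definition dist2_coloring :: "'a set \<Rightarrow> 'a set set \<Rightarrow> nat \<Rightarrow> ('a \<Rightarrow> nat) \<Rightarrow> bool" where
  "dist2_coloring V E k c \<longleftrightarrow>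
     (\<forall>v\<in>V. c v < k) \<and>
     (\<forall>u\<in>V. \<forall>v\<in>V. u \<noteq> v \<and> (adj E u v \<or> (\<exists>w. adj E u w \<and> adj E w v)) \<longrightarrow> c u \<noteq> c v)"

definition chi2 :: "'a set \<Rightarrow> 'a set set \<Rightarrow> nat" where
  "chi2 V E = (LEAST k. \<exists>c. dist2_coloring V E k c)"

text \<open>Combinatorial embeddings (rotation systems).\<close>
definition darts :: "'a set set \<Rightarrow> ('a \<times> 'a) set" where
  "darts E = {(u, v). {u, v} \<in> E \<and> u \<noteq> v}"

definition rotation_system :: "'a set set \<Rightarrow> ('a \<times> 'a \<Rightarrow> 'a \<times> 'a) \<Rightarrow> bool" where
  "rotation_system E rho \<longleftrightarrow>
     bij_betw rho (darts E) (darts E) \<and>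
     (\<forall>d\<in>darts E. fst (rho d) = fst d) \<and>
     (\<forall>d\<in>darts E. \<forall>d'\<in>darts E. fst d = fst d' \<longrightarrow> (\<exists>n. (rho ^^ n) d = d'))"

text \<open>Face permutation: after traversing dart (u,v), continue with the successor of (v,u)
  in the rotation at v.  Faces are the orbits of this permutation; the degree of a face is
  the number of darts in it (edges counted with multiplicity).\<close>
definition face_perm :: "('a \<times> 'a \<Rightarrow> 'a \<times> 'a) \<Rightarrow> 'a \<times> 'a \<Rightarrow> 'a \<times> 'a" where
  "face_perm rho d = rho (snd d, fst d)"

definition face_of :: "('a \<times> 'a \<Rightarrow> 'a \<times> 'a) \<Rightarrow> 'a \<times> 'a \<Rightarrow> ('a \<times> 'a) set" where
  "face_of rho d = {(face_perm rho ^^ n) d | n. True}"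

definition faces :: "'a set set \<Rightarrow> ('a \<times> 'a \<Rightarrow> 'a \<times> 'a) \<Rightarrow> ('a \<times> 'a) set set" where
  "faces E rho = face_of rho ` darts E"

definition face_degree :: "('a \<times> 'a) set \<Rightarrow> nat" where
  "face_degree f = card f"

definition incident_face :: "'a \<Rightarrow> ('a \<times> 'a) set \<Rightarrow> bool" where
  "incident_face v f \<longleftrightarrow> (\<exists>d\<in>f. fst d = v)"

definition component :: "'a set \<Rightarrow> 'a set set \<Rightarrow> 'a \<Rightarrow> 'a set" where
  "component V E v = {w\<in>V. (v, w) \<in> {(x, y). adj E x y}\<^sup>*}"

text \<open>A rotation system is a planar embedding iff every connected component with at least
  one edge satisfies Euler's formula V - E + F = 2 (Euler genus 0).\<close>
definition planar_embedding :: "'a set \<Rightarrow> 'a set set \<Rightarrow> ('a \<times> 'a \<Rightarrow> 'a \<times> 'a) \<Rightarrow> bool" where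
  "planar_embedding V E rho \<longleftrightarrow> rotation_system E rho \<and>
     (\<forall>v\<in>V. degree E v > 0 \<longrightarrow>
        (let C = component V E v in
          int (card C) - int (card {e\<in>E. e \<subseteq> C})
            + int (card {f\<in>faces E rho. \<forall>d\<in>f. fst d \<in> C}) = 2))"

definition planar :: "'a set \<Rightarrow> 'a set set \<Rightarrow> bool" where
  "planar V E \<longleftrightarrow> (\<exists>rho. planar_embedding V E rho)"

end

theory Submission
  imports Defs
begin

(* Let v be a 3-vertex on a triangular face v w u, and let x be its third neighbour.  If ux is
   an edge, delete uv; otherwise draw the chord ux inside the face x v u and delete vu and vx.
   The result is again planar with maximum degree at most 4 and has fewer edges; u, w and x stay
   pairwise within distance 2 (through u), and so does every other pair of vertices different
   from v.  By minimality the smaller graph has a distance-2 colouring with 12 colours, and as v is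
   within distance 2 of at most 3 + 2 + 2 + 3 = 10 vertices, v can be recoloured, contradicting
   chi_2 > 12.

   Planarity is handled combinatorially: deleting from a rotation system an edge that is not a
   bridge and whose two sides lie on different faces lowers the numbers of edges and of faces of
   its component by one each, so Euler's formula survives; adding an edge is the inverse. *)

section \<open>Orbits of permutations of a finite set\<close>

definition perm_on :: "('b \<Rightarrow> 'b) \<Rightarrow> 'b set \<Rightarrow> bool" where
  "perm_on f S \<longleftrightarrow> finite S \<and> inj_on f S \<and> f ` S \<subseteq> S"

definition orbit :: "('b \<Rightarrow> 'b) \<Rightarrow> 'b \<Rightarrow> 'b set" where
  "orbit f x = {(f ^^ n) x | n. True}"

lemma orbit_iff: "y \<in> orbit f x \<longleftrightarrow> (\<exists>n. (f ^^ n) x = y)"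
  unfolding orbit_def by auto

lemma orbit_self [simp]: "x \<in> orbit f x"
  unfolding orbit_iff by (metis funpow_0)

lemma orbit_step: "y \<in> orbit f x \<Longrightarrow> f y \<in> orbit f x"
  unfolding orbit_iff by (metis comp_apply funpow.simps(2))

lemma orbit_image_subset: "f ` orbit f x \<subseteq> orbit f x"
  by (simp add: image_subset_iff orbit_step)

lemma orbit_trans:
  assumes "y \<in> orbit f x" "z \<in> orbit f y"
  shows "z \<in> orbit f x"
proof -
  obtain m n where "(f ^^ n) x = y" "(f ^^ m) y = z" using assms unfolding orbit_iff by blast
  then have "(f ^^ (m + n)) x = z" by (simp add: funpow_add)
  then show ?thesis unfolding orbit_iff by blast
qed

lemma orbit_subset: "y \<in> orbit f x \<Longrightarrow> orbit f y \<subseteq> orbit f x"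
  by (meson orbit_trans subsetI)

lemma funpow_in_invariant: "f ` A \<subseteq> A \<Longrightarrow> x \<in> A \<Longrightarrow> (f ^^ n) x \<in> A"
  by (induction n) auto

lemma orbit_subset_invariant: "f ` A \<subseteq> A \<Longrightarrow> x \<in> A \<Longrightarrow> orbit f x \<subseteq> A"
  unfolding orbit_def using funpow_in_invariant[of f A x] by auto

lemma funpow_conj:
  assumes "\<forall>d\<in>A. g (F d) = F (h d)" "h ` A \<subseteq> A" "d \<in> A"
  shows "(g ^^ n) (F d) = F ((h ^^ n) d)"
  using funpow_in_invariant[OF assms(2,3)] assms(1) by (induction n) auto

lemma orbit_conj:
  assumes "\<forall>d\<in>A. g (F d) = F (h d)" "h ` A \<subseteq> A" "d \<in> A"
  shows "orbit g (F d) = F ` orbit h d"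
  unfolding orbit_def using funpow_conj[OF assms] by auto

lemma orbit_cong:
  assumes "\<forall>z\<in>A. f z = g z" "f ` A \<subseteq> A" "x \<in> A"
  shows "orbit f x = orbit g x"
  using orbit_conj[where F = id] assms by simp

lemma orbit_periodic:
  assumes "(f ^^ n) x = x" "0 < n"
  shows "orbit f x = (\<lambda>i. (f ^^ i) x) ` {..<n}"
proof
  show "orbit f x \<subseteq> (\<lambda>i. (f ^^ i) x) ` {..<n}"
  proof
    fix y assume "y \<in> orbit f x"
    then obtain k where "(f ^^ k) x = y" unfolding orbit_iff by blast
    then have "y = (f ^^ (k mod n)) x" using funpow_mod_eq[OF assms(1)] by simp
    then show "y \<in> (\<lambda>i. (f ^^ i) x) ` {..<n}" using assms(2) by simp
  qed
qed (auto simp: orbit_iff)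

lemma orbit_period_3: "f (f (f x)) = x \<Longrightarrow> orbit f x = {x, f x, f (f x)}"
  using orbit_periodic[where f=f and n=3 and x=x] by (simp add: numeral_3_eq_3 lessThan_Suc insert_commute)

lemma orbit_period_4: "f (f (f (f x))) = x \<Longrightarrow> orbit f x = {x, f x, f (f x), f (f (f x))}"
  using orbit_periodic[where f=f and n=4 and x=x] by (simp add: numeral_eq_Suc lessThan_Suc insert_commute)

lemma perm_on_iff_bij_betw: "finite S \<Longrightarrow> perm_on f S \<longleftrightarrow> bij_betw f S S"
  unfolding perm_on_def bij_betw_def using endo_inj_surj[of S f] by auto

lemma perm_on_in: "perm_on f S \<Longrightarrow> x \<in> S \<Longrightarrow> f x \<in> S"
  unfolding perm_on_def by auto

lemma perm_on_eq_iff: "perm_on f S \<Longrightarrow> x \<in> S \<Longrightarrow> y \<in> S \<Longrightarrow> f x = f y \<longleftrightarrow> x = y"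
  unfolding perm_on_def by (meson inj_on_eq_iff)

lemma perm_on_orbit_subset: "perm_on f S \<Longrightarrow> x \<in> S \<Longrightarrow> orbit f x \<subseteq> S"
  unfolding perm_on_def by (simp add: orbit_subset_invariant)

lemma perm_on_funpow_inj:
  assumes "perm_on f S" "x \<in> S" "y \<in> S" "(f ^^ n) x = (f ^^ n) y"
  shows "x = y"
  using assms(4)
proof (induction n)
  case (Suc n)
  have "f ` S \<subseteq> S" using assms(1) unfolding perm_on_def by simp
  then have "(f ^^ n) x \<in> S" "(f ^^ n) y \<in> S" using assms(2,3) by (simp_all add: funpow_in_invariant)
  then show ?case using Suc perm_on_eq_iff[OF assms(1)] by simp
qed simp

lemma perm_on_funpow_eq_imp_periodic:
  assumes "perm_on f S" "x \<in> S" "i \<le> j" "(f ^^ i) x = (f ^^ j) x"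
  shows "(f ^^ (j - i)) x = x"
proof -
  have "(f ^^ i) ((f ^^ (j - i)) x) = (f ^^ (i + (j - i))) x" by (simp add: funpow_add)
  then have "(f ^^ i) ((f ^^ (j - i)) x) = (f ^^ i) x" using assms(3,4) by simp
  moreover have "(f ^^ (j - i)) x \<in> S"
    using assms(1,2) funpow_in_invariant[of f S] unfolding perm_on_def by blast
  ultimately show ?thesis using perm_on_funpow_inj[OF assms(1) _ assms(2)] by blast
qed

lemma perm_on_periodic:
  assumes "perm_on f S" "x \<in> S"
  obtains m where "0 < m" "(f ^^ m) x = x"
proof -
  have fin: "finite S" and inv: "f ` S \<subseteq> S" using assms(1) unfolding perm_on_def by auto
  have sub: "(\<lambda>n. (f ^^ n) x) ` {0..card S} \<subseteq> S"
    using inv assms(2) by (auto simp: funpow_in_invariant)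
  have "\<not> inj_on (\<lambda>n. (f ^^ n) x) {0..card S}"
  proof
    assume "inj_on (\<lambda>n. (f ^^ n) x) {0..card S}"
    from card_inj_on_le[OF this sub fin] show False by simp
  qed
  then obtain i j where "i \<noteq> j" "(f ^^ i) x = (f ^^ j) x"
    unfolding inj_on_def by blast
  then obtain i j where "i < j" "(f ^^ i) x = (f ^^ j) x"
    by (metis linorder_neqE_nat)
  then show thesis
    using that[of "j - i"] perm_on_funpow_eq_imp_periodic[OF assms] by simp
qed

lemma funpow_card_orbit:
  assumes "perm_on f S" "x \<in> S"
  shows "(f ^^ card (orbit f x)) x = x"
proof -
  define p where "p = (LEAST m. 0 < m \<and> (f ^^ m) x = x)"
  obtain m where "0 < m" "(f ^^ m) x = x" using perm_on_periodic[OF assms] .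
  then have p: "0 < p \<and> (f ^^ p) x = x" unfolding p_def by (rule LeastI[of _ m, OF conjI])
  have "(f ^^ i) x \<noteq> (f ^^ j) x" if "i < j" "j < p" for i j
  proof
    assume "(f ^^ i) x = (f ^^ j) x"
    then have "(f ^^ (j - i)) x = x"
      using perm_on_funpow_eq_imp_periodic[OF assms] that(1) by simp
    moreover have "\<not> (0 < j - i \<and> (f ^^ (j - i)) x = x)"
      unfolding p_def by (rule not_less_Least) (use that p_def in simp)
    ultimately show False using that(1) by simp
  qed
  then have "inj_on (\<lambda>i. (f ^^ i) x) {..<p}"
    unfolding inj_on_def by (metis lessThan_iff linorder_neqE_nat)
  then have "card (orbit f x) = p"
    unfolding orbit_periodic[where f=f and n=p and x=x, OF conjunct2[OF p] conjunct1[OF p]]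
    by (simp add: card_image)
  then show ?thesis using p by simp
qed

lemma orbit_sym:
  assumes "perm_on f S" "x \<in> S" "y \<in> orbit f x"
  shows "x \<in> orbit f y"
proof -
  obtain n where n: "(f ^^ n) x = y" using assms(3) unfolding orbit_iff by blast
  obtain m where m: "0 < m" "(f ^^ m) x = x" using perm_on_periodic[OF assms(1,2)] .
  have "((f ^^ m) ^^ n) x = x" using m(2) by (induction n) simp_all
  then have per: "(f ^^ (m * n)) x = x" by (simp add: funpow_mult)
  have "(f ^^ (m * n - n)) y = (f ^^ (m * n - n + n)) x"
    using n by (simp add: funpow_add)
  also have "m * n - n + n = m * n" using m(1) by (cases m) auto
  finally have "(f ^^ (m * n - n)) y = (f ^^ (m * n)) x" .
  then show ?thesis using per unfolding orbit_iff by auto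
qed

lemma orbit_eq:
  assumes "perm_on f S" "x \<in> S" "y \<in> orbit f x"
  shows "orbit f y = orbit f x"
  using orbit_subset[OF assms(3)] orbit_subset[OF orbit_sym[OF assms]] by (rule subset_antisym)

lemma mem_orbit_iff_orbit_eq:
  assumes "perm_on f S" "x \<in> S"
  shows "p \<in> orbit f x \<longleftrightarrow> orbit f x = orbit f p"
  using orbit_eq[OF assms] orbit_self[of p f] by metis

lemma orbit_eq_if_meet:
  assumes "perm_on f S" "x \<in> S" "y \<in> S" "z \<in> orbit f x" "z \<in> orbit f y"
  shows "orbit f x = orbit f y"
  using orbit_eq[OF assms(1,2,4)] orbit_eq[OF assms(1,3,5)] by simp

definition orbits :: "('b \<Rightarrow> 'b) \<Rightarrow> 'b set \<Rightarrow> 'b set set" where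
  "orbits f S = orbit f ` S"

lemma orbits_cong:
  assumes "\<forall>z\<in>A. f z = g z" "f ` A \<subseteq> A"
  shows "orbits f A = orbits g A"
  unfolding orbits_def using orbit_cong[OF assms] by simp

section \<open>Splicing cycles\<close>

definition remove_from_cycle :: "('b \<Rightarrow> 'b) \<Rightarrow> 'b \<Rightarrow> 'b \<Rightarrow> 'b" where
  "remove_from_cycle f p x = (if f x = p then f p else f x)"

lemma perm_on_remove_from_cycle:
  assumes "perm_on f S" "p \<in> S"
  shows "perm_on (remove_from_cycle f p) (S - {p})"
proof -
  have inv: "f ` S \<subseteq> S" using assms(1) unfolding perm_on_def by simp
  note eq = perm_on_eq_iff[OF assms(1)]
  have "remove_from_cycle f p ` (S - {p}) \<subseteq> S - {p}"
    using inv assms(2) eq unfolding remove_from_cycle_def by (auto simp: image_subset_iff)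
  moreover have "inj_on (remove_from_cycle f p) (S - {p})"
  proof (rule inj_onI)
    fix y z assume "y \<in> S - {p}" "z \<in> S - {p}" "remove_from_cycle f p y = remove_from_cycle f p z"
    then show "y = z"
      using assms(2) eq[of y z] eq[of y p] eq[of z p] unfolding remove_from_cycle_def by (auto split: if_splits)
  qed
  ultimately show ?thesis using assms(1) unfolding perm_on_def by simp
qed

lemma funpow_in_orbit_remove_from_cycle:
  assumes "x \<noteq> p" "(f ^^ n) x \<noteq> p"
  shows "(f ^^ n) x \<in> orbit (remove_from_cycle f p) x"
  using assms(2)
proof (induction n rule: less_induct)
  case (less n)
  let ?g = "remove_from_cycle f p"
  show ?case
  proof (cases n)
    case (Suc k)
    show ?thesis
    proof (cases "(f ^^ k) x = p")
      case False
      then have "(f ^^ k) x \<in> orbit ?g x" using less Suc by simp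
      moreover have "?g ((f ^^ k) x) = (f ^^ n) x"
        using less.prems Suc unfolding remove_from_cycle_def by simp
      ultimately show ?thesis by (metis orbit_step)
    next
      case True
      then obtain j where j: "k = Suc j" using assms(1) by (cases k) auto
      have fp: "(f ^^ n) x = f p" using True Suc by simp
      then have "(f ^^ j) x \<noteq> p" using True j less.prems by auto
      then have "(f ^^ j) x \<in> orbit ?g x" using less Suc j by simp
      moreover have "?g ((f ^^ j) x) = (f ^^ n) x"
        using True j fp unfolding remove_from_cycle_def by simp
      ultimately show ?thesis by (metis orbit_step)
    qed
  qed simp
qed

lemma orbit_remove_from_cycle:
  assumes "perm_on f S" "p \<in> S" "x \<in> S - {p}"
  shows "orbit (remove_from_cycle f p) x = orbit f x - {p}"
proof
  let ?g = "remove_from_cycle f p"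
  have "?g ` (orbit f x - {p}) \<subseteq> orbit f x - {p}"
  proof (rule image_subsetI)
    fix z assume z: "z \<in> orbit f x - {p}"
    then have "z \<in> S" using perm_on_orbit_subset[OF assms(1)] assms(3) by blast
    then have "f z \<noteq> f p" using perm_on_eq_iff[OF assms(1) _ assms(2)] z by blast
    then have "f z = p \<Longrightarrow> f p \<noteq> p" by auto
    then show "?g z \<in> orbit f x - {p}" using z orbit_step[of z f x] orbit_step[of p f x]
      unfolding remove_from_cycle_def by auto
  qed
  from orbit_subset_invariant[OF this] show "orbit ?g x \<subseteq> orbit f x - {p}"
    using assms(3) by simp
  show "orbit f x - {p} \<subseteq> orbit ?g x"
    using funpow_in_orbit_remove_from_cycle[where f = f and p = p and x = x] assms(3)
    unfolding orbit_def by blast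
qed

lemma card_orbits_remove_from_cycle:
  assumes "perm_on f S" "p \<in> S" "f p \<noteq> p"
  shows "card (orbits (remove_from_cycle f p) (S - {p})) = card (orbits f S)"
proof -
  have fpS: "f p \<in> S - {p}" using perm_on_in[OF assms(1,2)] assms(3) by simp
  have orbit_fp: "orbit f (f p) = orbit f p" using orbit_eq[OF assms(1,2) orbit_step[OF orbit_self]] .
  have "orbits (remove_from_cycle f p) (S - {p}) = (\<lambda>X. X - {p}) ` orbits f S"
  proof
    show "orbits (remove_from_cycle f p) (S - {p}) \<subseteq> (\<lambda>X. X - {p}) ` orbits f S"
      using orbit_remove_from_cycle[OF assms(1,2)] unfolding orbits_def by auto
  next
    have "orbit f x - {p} \<in> orbits (remove_from_cycle f p) (S - {p})" if "x \<in> S" for x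
    proof (cases "x = p")
      case True
      then show ?thesis using orbit_remove_from_cycle[OF assms(1,2) fpS] orbit_fp fpS
        unfolding orbits_def by (metis image_eqI)
    next
      case False
      then show ?thesis using orbit_remove_from_cycle[OF assms(1,2)] that
        unfolding orbits_def by (metis Diff_iff empty_iff image_eqI insert_iff)
    qed
    then show "(\<lambda>X. X - {p}) ` orbits f S \<subseteq> orbits (remove_from_cycle f p) (S - {p})"
      unfolding orbits_def by blast
  qed
  moreover have "inj_on (\<lambda>X. X - {p}) (orbits f S)"
  proof (rule inj_onI)
    fix X Y assume XY: "X \<in> orbits f S" "Y \<in> orbits f S" "X - {p} = Y - {p}"
    obtain x y where xy: "x \<in> S" "y \<in> S" "X = orbit f x" "Y = orbit f y"
      using XY(1,2) unfolding orbits_def by blast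
    have "\<exists>z. z \<in> X - {p}"
      using xy(3) orbit_self[of x f] orbit_step[OF orbit_self, of f x] assms(3) by blast
    then obtain z where "z \<in> orbit f x" "z \<in> orbit f y" using XY(3) xy by blast
    then show "X = Y" using orbit_eq_if_meet[OF assms(1) xy(1,2)] xy by simp
  qed
  ultimately show ?thesis by (simp add: card_image)
qed

lemma perm_on_fun_upd_fixpoint:
  assumes "perm_on f S" "q \<notin> S"
  shows "perm_on (f(q := q)) (insert q S)"
  using assms unfolding perm_on_def inj_on_def by (auto simp: image_subset_iff)

definition swap_images :: "('b \<Rightarrow> 'b) \<Rightarrow> 'b \<Rightarrow> 'b \<Rightarrow> 'b \<Rightarrow> 'b" where
  "swap_images f p q = f(p := f q, q := f p)"

lemma perm_on_swap_images:
  assumes "perm_on f S" "p \<in> S" "q \<in> S"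
  shows "perm_on (swap_images f p q) S"
proof -
  have "swap_images f p q ` S \<subseteq> S"
    using assms perm_on_in[OF assms(1)] unfolding swap_images_def by auto
  moreover have "inj_on (swap_images f p q) S"
    using assms perm_on_eq_iff[OF assms(1)] unfolding swap_images_def inj_on_def by auto
  ultimately show ?thesis using assms(1) unfolding perm_on_def by simp
qed

lemma funpow_eq_outside:
  assumes "\<forall>i<n. (f ^^ i) z \<notin> B" "\<forall>w. w \<notin> B \<longrightarrow> g w = f w"
  shows "(g ^^ n) z = (f ^^ n) z"
  using assms(1) by (induction n) (simp_all add: assms(2))

lemma orbit_subset_orbit_swap_images:
  assumes "perm_on f S" "p \<in> S" "q \<notin> orbit f p"
  shows "orbit f p \<subseteq> orbit (swap_images f p q) q"
proof
  let ?g = "swap_images f p q"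
  fix y assume "y \<in> orbit f p"
  then have "\<exists>n. (f ^^ n) (f p) = y"
    using orbit_eq[OF assms(1,2) orbit_step[OF orbit_self]] unfolding orbit_iff[symmetric] by simp
  then obtain n where n: "(f ^^ n) (f p) = y" and least: "\<And>m. m < n \<Longrightarrow> (f ^^ m) (f p) \<noteq> y"
    using exists_least_iff[of "\<lambda>n. (f ^^ n) (f p) = y"] by blast
  have "(f ^^ i) (f p) \<notin> {p, q}" if "i < n" for i
  proof
    assume "(f ^^ i) (f p) \<in> {p, q}"
    moreover have "(f ^^ i) (f p) \<in> orbit f p"
      by (metis orbit_iff funpow_Suc_right comp_apply)
    ultimately have "(f ^^ Suc i) (f p) = f p" using assms(3) by auto
    then have "(f ^^ (n - Suc i)) (f p) = y"
      using n that by (metis Suc_leI comp_apply funpow_add le_add_diff_inverse2)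
    then show False using least[of "n - Suc i"] that by simp
  qed
  then have "(?g ^^ n) (f p) = y"
    using funpow_eq_outside[of n f "f p" "{p, q}" ?g] n unfolding swap_images_def by simp
  moreover have "?g q = f p" unfolding swap_images_def by simp
  ultimately have "(?g ^^ Suc n) q = y" by (simp only: funpow_Suc_right comp_apply)
  then show "y \<in> orbit ?g q" unfolding orbit_iff by blast
qed

lemma orbit_swap_images_merge:
  assumes "perm_on f S" "p \<in> S" "q \<in> S" "q \<notin> orbit f p"
  shows "orbit (swap_images f p q) p = orbit f p \<union> orbit f q"
proof
  let ?g = "swap_images f p q"
  have "p \<noteq> q" using assms(4) by auto
  then have comm: "swap_images f q p = ?g" unfolding swap_images_def by (simp add: fun_upd_twist)
  have "p \<notin> orbit f q" using orbit_sym[OF assms(1,3)] assms(4) by blast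
  then have "orbit f q \<subseteq> orbit ?g p"
    using orbit_subset_orbit_swap_images[OF assms(1,3)] comm by metis
  moreover have "orbit ?g q \<subseteq> orbit ?g p"
    using calculation orbit_self[of q f] by (intro orbit_subset) blast
  ultimately show "orbit f p \<union> orbit f q \<subseteq> orbit ?g p"
    using orbit_subset_orbit_swap_images[OF assms(1,2,4)] by blast
next
  let ?g = "swap_images f p q" and ?U = "orbit f p \<union> orbit f q"
  have "?g ` ?U \<subseteq> ?U"
    using orbit_image_subset[of f p] orbit_image_subset[of f q] orbit_self[of p f] orbit_self[of q f]
    unfolding swap_images_def by (auto simp: image_subset_iff)
  then show "orbit ?g p \<subseteq> ?U" by (rule orbit_subset_invariant) simp
qed

lemma orbit_swap_images_other:
  assumes "p \<notin> orbit f x" "q \<notin> orbit f x"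
  shows "orbit (swap_images f p q) x = orbit f x"
proof -
  have "\<forall>z\<in>orbit f x. f z = swap_images f p q z"
    using assms unfolding swap_images_def by (metis fun_upd_other)
  from orbit_cong[OF this orbit_image_subset orbit_self] show ?thesis ..
qed

lemma orbits_swap_images:
  assumes "perm_on f S" "p \<in> S" "q \<in> S" "q \<notin> orbit f p"
  shows "orbits (swap_images f p q) S
    = insert (orbit f p \<union> orbit f q) (orbits f S - {orbit f p, orbit f q})"
    (is "_ = insert ?U ?R")
proof
  let ?g = "swap_images f p q"
  have merge: "orbit ?g p = ?U" using orbit_swap_images_merge[OF assms] .
  have meet: "p \<in> orbit f x \<or> q \<in> orbit f x \<longleftrightarrow> orbit f x = orbit f p \<or> orbit f x = orbit f q"
    if "x \<in> S" for x
    using mem_orbit_iff_orbit_eq[OF assms(1) that] by blast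
  have "orbit ?g x \<in> insert ?U ?R" if x: "x \<in> S" for x
  proof (cases "p \<in> orbit f x \<or> q \<in> orbit f x")
    case True
    then have "x \<in> orbit ?g p" using meet[OF x] merge orbit_self[of x f] by auto
    then show ?thesis using orbit_eq[OF perm_on_swap_images[OF assms(1-3)] assms(2)] merge by simp
  next
    case False
    then show ?thesis using orbit_swap_images_other[of p f x q] meet[OF x] x
      unfolding orbits_def by auto
  qed
  then show "orbits ?g S \<subseteq> insert ?U ?R"
    unfolding orbits_def by (simp add: image_subset_iff)
  have "?R \<subseteq> orbits ?g S"
    using orbit_swap_images_other meet unfolding orbits_def by fastforce
  moreover have "?U \<in> orbits ?g S" using merge assms(2) unfolding orbits_def by blast
  ultimately show "insert ?U ?R \<subseteq> orbits ?g S" by blast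
qed

lemma card_orbits_swap_images:
  assumes "perm_on f S" "p \<in> S" "q \<in> S" "q \<notin> orbit f p"
  shows "card (orbits (swap_images f p q) S) + 1 = card (orbits f S)"
proof -
  let ?U = "orbit f p \<union> orbit f q" and ?R = "orbits f S - {orbit f p, orbit f q}"
  have "?U \<notin> ?R"
  proof
    assume "?U \<in> ?R"
    then obtain x where x: "x \<in> S" "?U = orbit f x" "orbit f x \<noteq> orbit f p"
      unfolding orbits_def by auto
    then have "p \<in> orbit f x" by auto
    then show False using mem_orbit_iff_orbit_eq[OF assms(1) x(1)] x(3) by simp
  qed
  moreover have "card ?R + 2 = card (orbits f S)"
  proof -
    have "orbit f p \<noteq> orbit f q" using assms(4) orbit_self[of q f] by blast
    moreover have fin: "finite (orbits f S)" using assms(1) unfolding perm_on_def orbits_def by simp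
    moreover have sub: "{orbit f p, orbit f q} \<subseteq> orbits f S"
      using assms(2,3) unfolding orbits_def by auto
    ultimately show ?thesis using card_mono[OF fin sub] by (simp add: card_Diff_subset)
  qed
  moreover have "finite ?R" using assms(1) unfolding perm_on_def orbits_def by simp
  ultimately show ?thesis using orbits_swap_images[OF assms] by simp
qed

section \<open>Rotation systems and the Euler characteristic\<close>

lemma darts_iff: "(x, y) \<in> darts E \<longleftrightarrow> {x, y} \<in> E \<and> x \<noteq> y"
  unfolding darts_def by simp

lemma dart_reverse: "d \<in> darts E \<Longrightarrow> (snd d, fst d) \<in> darts E"
  unfolding darts_def by (auto simp: insert_commute)

lemma dart_edge: "d \<in> darts E \<Longrightarrow> {fst d, snd d} \<in> E"
  unfolding darts_def by auto

lemma darts_Diff_edge: "darts (E - {{a, b}}) = darts E - {(a, b), (b, a)}"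
  unfolding darts_def by (auto simp: doubleton_eq_iff)

lemma simple_graph_finite_edges: "simple_graph V E \<Longrightarrow> finite E"
  unfolding simple_graph_def by (meson Pow_iff finite_Pow_iff finite_subset subsetI)

lemma simple_graph_edge_in: "simple_graph V E \<Longrightarrow> {x, y} \<in> E \<Longrightarrow> x \<in> V \<and> y \<in> V"
  unfolding simple_graph_def by auto

lemma simple_graph_edge_neq: "simple_graph V E \<Longrightarrow> {x, y} \<in> E \<Longrightarrow> x \<noteq> y"
  unfolding simple_graph_def by fastforce

lemma simple_graph_Diff: "simple_graph V E \<Longrightarrow> simple_graph V (E - X)"
  unfolding simple_graph_def by auto

lemma finite_darts: "simple_graph V E \<Longrightarrow> finite (darts E)"
proof -
  assume sg: "simple_graph V E"
  then have "darts E \<subseteq> V \<times> V" using simple_graph_edge_in unfolding darts_def by fast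
  then show ?thesis using sg unfolding simple_graph_def by (meson finite_SigmaI finite_subset)
qed

lemma finite_neighbours: "simple_graph V E \<Longrightarrow> finite {z. {z, y} \<in> E}"
proof -
  assume sg: "simple_graph V E"
  then have "{z. {z, y} \<in> E} \<subseteq> V" using simple_graph_edge_in by fast
  then show ?thesis using sg unfolding simple_graph_def by (meson finite_subset)
qed

lemma degree_pos_iff: "simple_graph V E \<Longrightarrow> 0 < degree E y \<longleftrightarrow> (\<exists>z. {z, y} \<in> E)"
  unfolding degree_def by (simp add: card_gt_0_iff finite_neighbours)

lemma degree_mono: "simple_graph V E \<Longrightarrow> E' \<subseteq> E \<Longrightarrow> degree E' y \<le> degree E y"
  unfolding degree_def by (intro card_mono finite_neighbours) auto

lemma walk2_in_rtrancl: "{a, b} \<in> E \<Longrightarrow> {b, c} \<in> E \<Longrightarrow> (a, c) \<in> {(x, y). adj E x y}\<^sup>*"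
  unfolding adj_def by (simp add: converse_rtrancl_into_rtrancl)

lemma walk3_in_rtrancl:
  "{a, b} \<in> E \<Longrightarrow> {b, c} \<in> E \<Longrightarrow> {c, d} \<in> E \<Longrightarrow> (a, d) \<in> {(x, y). adj E x y}\<^sup>*"
  unfolding adj_def by (simp add: converse_rtrancl_into_rtrancl)

lemma degree_le_if_neighbour_replaced:
  assumes sg: "simple_graph V E" and sub: "{z. {z, y} \<in> E'} \<subseteq> insert a ({z. {z, y} \<in> E} - {b})"
    and b: "{b, y} \<in> E"
  shows "degree E' y \<le> degree E y"
proof -
  have fin: "finite {z. {z, y} \<in> E}" using finite_neighbours[OF sg] .
  have "degree E' y \<le> card (insert a ({z. {z, y} \<in> E} - {b}))"
    unfolding degree_def using fin sub by (intro card_mono) auto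
  also have "\<dots> \<le> Suc (card ({z. {z, y} \<in> E} - {b}))" using fin by (simp add: card_insert_if)
  also have "\<dots> = degree E y" unfolding degree_def using card_Suc_Diff1[OF fin] b by simp
  finally show ?thesis .
qed

lemma rotation_system_perm_on: "simple_graph V E \<Longrightarrow> rotation_system E \<rho> \<Longrightarrow> perm_on \<rho> (darts E)"
  unfolding rotation_system_def using perm_on_iff_bij_betw finite_darts by blast

lemma rotation_system_in: "rotation_system E \<rho> \<Longrightarrow> d \<in> darts E \<Longrightarrow> \<rho> d \<in> darts E"
  unfolding rotation_system_def bij_betw_def by auto

lemma rotation_system_fst: "rotation_system E \<rho> \<Longrightarrow> d \<in> darts E \<Longrightarrow> fst (\<rho> d) = fst d"
  unfolding rotation_system_def by auto

lemma rotation_system_orbit: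
  "rotation_system E \<rho> \<Longrightarrow> d \<in> darts E \<Longrightarrow> d' \<in> darts E \<Longrightarrow> fst d = fst d' \<Longrightarrow> d' \<in> orbit \<rho> d"
  unfolding rotation_system_def orbit_iff by auto

lemma rotation_system_not_fixed:
  assumes rs: "rotation_system E \<rho>" and "(a, b) \<in> darts E" "(a, c) \<in> darts E" "b \<noteq> c"
  shows "\<rho> (a, b) \<noteq> (a, b)"
proof
  assume "\<rho> (a, b) = (a, b)"
  then have "orbit \<rho> (a, b) \<subseteq> {(a, b)}" by (intro orbit_subset_invariant) auto
  then show False using rotation_system_orbit[OF rs assms(2,3)] assms(4) by auto
qed

lemma face_perm_in: "rotation_system E \<rho> \<Longrightarrow> d \<in> darts E \<Longrightarrow> face_perm \<rho> d \<in> darts E"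
  unfolding face_perm_def by (simp add: dart_reverse rotation_system_in)

lemma face_perm_fst: "rotation_system E \<rho> \<Longrightarrow> d \<in> darts E \<Longrightarrow> fst (face_perm \<rho> d) = snd d"
  unfolding face_perm_def by (simp add: dart_reverse rotation_system_fst)

lemma perm_on_face_perm:
  assumes "simple_graph V E" "rotation_system E \<rho>"
  shows "perm_on (face_perm \<rho>) (darts E)"
proof -
  have "inj_on (face_perm \<rho>) (darts E)"
  proof (rule inj_onI)
    fix x y assume xy: "x \<in> darts E" "y \<in> darts E" "face_perm \<rho> x = face_perm \<rho> y"
    then have "(snd x, fst x) = (snd y, fst y)"
      using perm_on_eq_iff[OF rotation_system_perm_on[OF assms]] dart_reverse
      unfolding face_perm_def by blast
    then show "x = y" by (simp add: prod_eq_iff)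
  qed
  then show ?thesis
    using face_perm_in[OF assms(2)] finite_darts[OF assms(1)] unfolding perm_on_def by blast
qed

lemma face_of_eq_orbit: "face_of \<rho> d = orbit (face_perm \<rho>) d"
  unfolding face_of_def orbit_def by simp

lemma component_edge_closed:
  assumes "simple_graph V E" "y \<in> component V E v" "{y, z} \<in> E"
  shows "z \<in> component V E v"
proof -
  have "(v, y) \<in> {(x, y). adj E x y}\<^sup>*" using assms(2) unfolding component_def by simp
  moreover have "(y, z) \<in> {(x, y). adj E x y}" using assms(3) unfolding adj_def by simp
  ultimately have "(v, z) \<in> {(x, y). adj E x y}\<^sup>*" by (rule rtrancl_into_rtrancl)
  then show ?thesis using simple_graph_edge_in[OF assms(1,3)] unfolding component_def by simp
qed

definition component_darts :: "'a set set \<Rightarrow> 'a set \<Rightarrow> ('a \<times> 'a) set" where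
  "component_darts E C = {d \<in> darts E. fst d \<in> C}"

lemma face_perm_component_darts:
  assumes "simple_graph V E" "rotation_system E \<rho>"
  shows "face_perm \<rho> ` component_darts E (component V E v) \<subseteq> component_darts E (component V E v)"
proof (rule image_subsetI)
  fix d assume "d \<in> component_darts E (component V E v)"
  then have d: "d \<in> darts E" "fst d \<in> component V E v" unfolding component_darts_def by auto
  then have "snd d \<in> component V E v" using component_edge_closed[OF assms(1)] dart_edge by blast
  then show "face_perm \<rho> d \<in> component_darts E (component V E v)"
    using face_perm_in[OF assms(2) d(1)] face_perm_fst[OF assms(2) d(1)] unfolding component_darts_def by simp
qed

lemma perm_on_face_perm_component_darts:
  assumes "simple_graph V E" "rotation_system E \<rho>"
  shows "perm_on (face_perm \<rho>) (component_darts E (component V E v))"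
proof -
  have "component_darts E (component V E v) \<subseteq> darts E" unfolding component_darts_def by auto
  then show ?thesis using perm_on_face_perm[OF assms] face_perm_component_darts[OF assms]
    unfolding perm_on_def by (meson finite_subset inj_on_subset)
qed

lemma faces_within_component:
  assumes "simple_graph V E" "rotation_system E \<rho>"
  shows "{f \<in> faces E \<rho>. \<forall>d\<in>f. fst d \<in> component V E v}
    = orbits (face_perm \<rho>) (component_darts E (component V E v))"
    (is "?F = orbits ?p ?S")
proof
  show "?F \<subseteq> orbits ?p ?S"
    unfolding faces_def face_of_eq_orbit orbits_def component_darts_def by force
next
  have "orbit ?p d \<subseteq> ?S" if "d \<in> ?S" for d
    using orbit_subset_invariant[OF face_perm_component_darts[OF assms] that] .
  then show "orbits ?p ?S \<subseteq> ?F"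
    unfolding faces_def face_of_eq_orbit orbits_def component_darts_def by fastforce
qed

definition euler_char :: "'a set set \<Rightarrow> ('a \<times> 'a \<Rightarrow> 'a \<times> 'a) \<Rightarrow> 'a set \<Rightarrow> int" where
  "euler_char E \<rho> C = int (card C) - int (card {e\<in>E. e \<subseteq> C})
     + int (card (orbits (face_perm \<rho>) (component_darts E C)))"

lemma planar_embedding_iff_euler_char:
  assumes "simple_graph V E"
  shows "planar_embedding V E \<rho> \<longleftrightarrow> rotation_system E \<rho> \<and>
     (\<forall>v\<in>V. 0 < degree E v \<longrightarrow> euler_char E \<rho> (component V E v) = 2)"
  unfolding planar_embedding_def Let_def euler_char_def
  using faces_within_component[OF assms] by auto

section \<open>Deleting and inserting edges\<close>

lemma perm_on_remove_from_cycle_twice: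
  assumes "perm_on f S" "p \<in> S" "q \<in> S" "p \<noteq> q"
  shows "perm_on (remove_from_cycle (remove_from_cycle f p) q) (S - {p, q})"
proof -
  have "S - {p, q} = S - {p} - {q}" by blast
  then show ?thesis
    using perm_on_remove_from_cycle[OF perm_on_remove_from_cycle[OF assms(1,2)], of q] assms(3,4) by simp
qed

lemma orbit_remove_from_cycle_twice:
  assumes "perm_on f S" "p \<in> S" "q \<in> S" "p \<noteq> q" "x \<in> S - {p, q}"
  shows "orbit (remove_from_cycle (remove_from_cycle f p) q) x = orbit f x - {p, q}"
proof -
  have "orbit (remove_from_cycle (remove_from_cycle f p) q) x = orbit (remove_from_cycle f p) x - {q}"
    using orbit_remove_from_cycle[OF perm_on_remove_from_cycle[OF assms(1,2)]] assms(3-5) by simp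
  also have "\<dots> = orbit f x - {p, q}"
    using orbit_remove_from_cycle[OF assms(1,2)] assms(5) by auto
  finally show ?thesis .
qed

lemma fst_remove_from_cycle:
  "fst (f d) = fst d \<Longrightarrow> fst (f p) = fst p \<Longrightarrow> fst (remove_from_cycle f p d) = fst d"
  unfolding remove_from_cycle_def by (metis (full_types))

definition delete_edge_rotation :: "('a \<times> 'a \<Rightarrow> 'a \<times> 'a) \<Rightarrow> 'a \<Rightarrow> 'a \<Rightarrow> 'a \<times> 'a \<Rightarrow> 'a \<times> 'a" where
  "delete_edge_rotation \<rho> a b = remove_from_cycle (remove_from_cycle \<rho> (a, b)) (b, a)"

lemma delete_edge_rotation_apply:
  assumes "\<rho> (a, b) \<noteq> (b, a)" "\<rho> (b, a) \<noteq> (a, b)"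
  shows "delete_edge_rotation \<rho> a b d
    = (if \<rho> d = (a, b) then \<rho> (a, b) else if \<rho> d = (b, a) then \<rho> (b, a) else \<rho> d)"
  using assms unfolding delete_edge_rotation_def remove_from_cycle_def by auto

lemma rotation_system_delete_edge:
  assumes sg: "simple_graph V E" and rs: "rotation_system E \<rho>" and ab: "{a, b} \<in> E"
  shows "rotation_system (E - {{a, b}}) (delete_edge_rotation \<rho> a b)"
proof -
  let ?\<rho>' = "delete_edge_rotation \<rho> a b" and ?D' = "darts (E - {{a, b}})"
  have p: "perm_on \<rho> (darts E)" using rotation_system_perm_on[OF sg rs] .
  have "a \<noteq> b" using simple_graph_edge_neq[OF sg ab] .
  then have abD: "(a, b) \<in> darts E" "(b, a) \<in> darts E" "(a, b) \<noteq> (b, a)"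
    using ab by (auto simp: darts_iff insert_commute)
  have D': "?D' = darts E - {(a, b), (b, a)}" by (simp add: darts_Diff_edge)
  have "perm_on ?\<rho>' ?D'"
    unfolding D' delete_edge_rotation_def using perm_on_remove_from_cycle_twice[OF p abD] .
  moreover have "fst (?\<rho>' d) = fst d" if "d \<in> ?D'" for d
    unfolding delete_edge_rotation_def
    using that abD rotation_system_fst[OF rs] D'
    by (intro fst_remove_from_cycle) auto
  moreover have "d' \<in> orbit ?\<rho>' d" if "d \<in> ?D'" "d' \<in> ?D'" "fst d = fst d'" for d d'
    using that rotation_system_orbit[OF rs, of d d'] D'
      orbit_remove_from_cycle_twice[OF p abD, of d]
    unfolding delete_edge_rotation_def by auto
  ultimately show ?thesis
    unfolding rotation_system_def orbit_iff
    using perm_on_iff_bij_betw finite_darts[OF simple_graph_Diff[OF sg]] by blast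
qed

lemma component_delete_edge:
  assumes "{a, b} \<in> E" and path: "(a, b) \<in> {(x, y). adj (E - {{a, b}}) x y}\<^sup>*"
  shows "component V (E - {{a, b}}) y = component V E y"
proof -
  let ?R = "{(x, y). adj E x y}" and ?R' = "{(x, y). adj (E - {{a, b}}) x y}"
  have sub: "?R' \<subseteq> ?R" unfolding adj_def by auto
  have "sym ?R'" unfolding sym_def adj_def by (auto simp: insert_commute)
  then have path': "(b, a) \<in> ?R'\<^sup>*" using path sym_rtrancl unfolding sym_def by blast
  have "?R \<subseteq> ?R'\<^sup>*"
  proof
    fix p assume "p \<in> ?R"
    then obtain x z where p: "p = (x, z)" "{x, z} \<in> E" unfolding adj_def by auto
    show "p \<in> ?R'\<^sup>*"
    proof (cases "{x, z} = {a, b}")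
      case True
      then have "(x, z) = (a, b) \<or> (x, z) = (b, a)" by (auto simp: doubleton_eq_iff)
      then show ?thesis using path path' p by auto
    next
      case False
      then show ?thesis using p unfolding adj_def by auto
    qed
  qed
  then have "?R\<^sup>* = ?R'\<^sup>*" using rtrancl_subset[OF sub] by simp
  then show ?thesis unfolding component_def by simp
qed

lemma degree_pos_delete_edge:
  assumes sg: "simple_graph V E" and rs: "rotation_system E \<rho>" and ab: "{a, b} \<in> E"
    and "\<rho> (a, b) \<noteq> (a, b)" "\<rho> (b, a) \<noteq> (b, a)"
  shows "0 < degree (E - {{a, b}}) y \<longleftrightarrow> 0 < degree E y"
proof -
  have other: "\<exists>c. {c, s} \<in> E - {{a, b}}" if st: "{s, t} = {a, b}" "\<rho> (s, t) \<noteq> (s, t)" for s t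
  proof -
    have stD: "(s, t) \<in> darts E"
      using st(1) ab simple_graph_edge_neq[OF sg ab] by (auto simp: darts_iff doubleton_eq_iff insert_commute)
    obtain c where c: "\<rho> (s, t) = (s, c)"
      using rotation_system_fst[OF rs stD] by (metis fst_conv prod.collapse)
    have "{s, c} \<in> E" "c \<noteq> t"
      using rotation_system_in[OF rs stD] c st(2) by (auto simp: darts_iff)
    then show ?thesis using st(1) by (auto simp: doubleton_eq_iff insert_commute)
  qed
  have "(\<exists>z. {z, y} \<in> E - {{a, b}}) \<longleftrightarrow> (\<exists>z. {z, y} \<in> E)"
  proof
    assume "\<exists>z. {z, y} \<in> E"
    then obtain z where z: "{z, y} \<in> E" by blast
    show "\<exists>z. {z, y} \<in> E - {{a, b}}"
    proof (cases "{y, z} = {a, b}")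
      case True
      then show ?thesis using other[of y z] assms(4,5) by (auto simp: doubleton_eq_iff)
    next
      case False
      then show ?thesis using z by (auto simp: insert_commute)
    qed
  qed auto
  then show ?thesis using degree_pos_iff[OF sg] degree_pos_iff[OF simple_graph_Diff[OF sg]] by simp
qed

lemma face_perm_delete_edge_rotation:
  assumes rs: "rotation_system E \<rho>" and "(b, a) \<in> darts E" "d \<noteq> (a, b)" "d \<noteq> (b, a)"
  shows "face_perm (delete_edge_rotation \<rho> a b) d
    = remove_from_cycle (remove_from_cycle (swap_images (face_perm \<rho>) (a, b) (b, a)) (a, b)) (b, a) d"
proof -
  let ?h = "swap_images (face_perm \<rho>) (a, b) (b, a)" and ?R1 = "remove_from_cycle \<rho> (a, b)"
  have "fst (\<rho> (b, a)) = b" "b \<noteq> a" using rotation_system_fst[OF assms(1,2)] assms(2) by (auto simp: darts_iff)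
  then have ba: "\<rho> (b, a) \<noteq> (a, b)" "(a, b) \<noteq> (b, a)" by auto
  have "?h d = \<rho> (snd d, fst d)" "?h (a, b) = \<rho> (a, b)" "?h (b, a) = \<rho> (b, a)"
    using assms(3,4) ba(2) unfolding swap_images_def face_perm_def by simp_all
  then have "remove_from_cycle ?h (a, b) d = ?R1 (snd d, fst d)"
    "remove_from_cycle ?h (a, b) (b, a) = ?R1 (b, a)"
    using ba(1) unfolding remove_from_cycle_def by simp_all
  then show ?thesis
    unfolding face_perm_def delete_edge_rotation_def remove_from_cycle_def[of "remove_from_cycle _ _"]
    by simp
qed

lemma card_face_orbits_delete_edge:
  assumes sg: "simple_graph V E" and rs: "rotation_system E \<rho>" and ab: "{a, b} \<in> E"
    and na: "\<rho> (a, b) \<noteq> (a, b)" and nb: "\<rho> (b, a) \<noteq> (b, a)"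
    and nf: "(b, a) \<notin> face_of \<rho> (a, b)" and aC: "a \<in> component V E v"
  shows "card (orbits (face_perm (delete_edge_rotation \<rho> a b))
        (component_darts (E - {{a, b}}) (component V E v))) + 1
    = card (orbits (face_perm \<rho>) (component_darts E (component V E v)))"
proof -
  let ?C = "component V E v" and ?f = "face_perm \<rho>"
  let ?S = "component_darts E ?C" and ?S' = "component_darts (E - {{a, b}}) ?C"
  let ?h = "swap_images ?f (a, b) (b, a)"
  let ?H1 = "remove_from_cycle ?h (a, b)"
  let ?H2 = "remove_from_cycle ?H1 (b, a)"
  have "a \<noteq> b" using simple_graph_edge_neq[OF sg ab] .
  then have abS: "(a, b) \<in> ?S" "(b, a) \<in> ?S" "(a, b) \<noteq> (b, a)"
    using ab aC component_edge_closed[OF sg aC ab] unfolding component_darts_def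
    by (auto simp: darts_iff insert_commute)
  have S': "?S' = ?S - {(a, b)} - {(b, a)}" unfolding component_darts_def darts_Diff_edge by auto
  have pS: "perm_on ?f ?S" using perm_on_face_perm_component_darts[OF sg rs] .
  have ph: "perm_on ?h ?S" using perm_on_swap_images[OF pS abS(1,2)] .
  have h_ab: "?h (a, b) \<noteq> (a, b)" using na abS(3) unfolding swap_images_def face_perm_def by simp
  have pH1: "perm_on ?H1 (?S - {(a, b)})" using perm_on_remove_from_cycle[OF ph abS(1)] .
  have "fst (\<rho> (b, a)) \<noteq> a"
    using rotation_system_fst[OF rs] abS unfolding component_darts_def by auto
  then have H1_ba: "?H1 (b, a) \<noteq> (b, a)"
    using nb abS(3) unfolding remove_from_cycle_def swap_images_def face_perm_def by auto
  \<comment> \<open>the swap merges the faces through (a, b) and (b, a); splicing both darts out keeps the count\<close>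
  have "card (orbits ?h ?S) + 1 = card (orbits ?f ?S)"
    using card_orbits_swap_images[OF pS abS(1,2)] nf unfolding face_of_eq_orbit by blast
  moreover have "card (orbits ?H1 (?S - {(a, b)})) = card (orbits ?h ?S)"
    using card_orbits_remove_from_cycle[OF ph abS(1) h_ab] .
  moreover have "card (orbits ?H2 ?S') = card (orbits ?H1 (?S - {(a, b)}))"
    unfolding S' using card_orbits_remove_from_cycle[OF pH1 _ H1_ba] abS by simp
  moreover have "orbits (face_perm (delete_edge_rotation \<rho> a b)) ?S' = orbits ?H2 ?S'"
  proof -
    have "perm_on ?H2 ?S'" unfolding S' using perm_on_remove_from_cycle[OF pH1] abS by simp
    moreover have "(b, a) \<in> darts E" using abS(2) unfolding component_darts_def by simp
    then have "\<forall>d\<in>?S'. ?H2 d = face_perm (delete_edge_rotation \<rho> a b) d"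
      using face_perm_delete_edge_rotation[OF rs] S' by simp
    ultimately show ?thesis using orbits_cong unfolding perm_on_def by metis
  qed
  ultimately show ?thesis by simp
qed

lemma euler_char_delete_edge_same_component:
  assumes sg: "simple_graph V E" and rs: "rotation_system E \<rho>" and ab: "{a, b} \<in> E"
    and "\<rho> (a, b) \<noteq> (a, b)" "\<rho> (b, a) \<noteq> (b, a)"
    and "(b, a) \<notin> face_of \<rho> (a, b)" and aC: "a \<in> component V E v"
  shows "euler_char (E - {{a, b}}) (delete_edge_rotation \<rho> a b) (component V E v)
    = euler_char E \<rho> (component V E v)"
proof -
  let ?C = "component V E v"
  have "{e\<in>E - {{a, b}}. e \<subseteq> ?C} = {e\<in>E. e \<subseteq> ?C} - {{a, b}}" by auto
  moreover have "{a, b} \<in> {e\<in>E. e \<subseteq> ?C}" using ab aC component_edge_closed[OF sg aC ab] by simp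
  moreover have "finite {e\<in>E. e \<subseteq> ?C}" using simple_graph_finite_edges[OF sg] by simp
  ultimately have "card {e\<in>E - {{a, b}}. e \<subseteq> ?C} + 1 = card {e\<in>E. e \<subseteq> ?C}"
    using card_Suc_Diff1 by (metis Suc_eq_plus1)
  then show ?thesis
    using card_face_orbits_delete_edge[OF assms] unfolding euler_char_def by simp
qed

lemma euler_char_delete_edge_other_component:
  assumes sg: "simple_graph V E" and rs: "rotation_system E \<rho>" and ab: "{a, b} \<in> E"
    and aC: "a \<notin> component V E v"
  shows "euler_char (E - {{a, b}}) (delete_edge_rotation \<rho> a b) (component V E v)
    = euler_char E \<rho> (component V E v)"
proof -
  let ?C = "component V E v"
  let ?S = "component_darts E ?C"
  have bC: "b \<notin> ?C" using aC component_edge_closed[OF sg, of b v a] ab by (auto simp: insert_commute)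
  have edges: "{e\<in>E - {{a, b}}. e \<subseteq> ?C} = {e\<in>E. e \<subseteq> ?C}" using aC by auto
  have S': "component_darts (E - {{a, b}}) ?C = ?S"
    unfolding component_darts_def darts_Diff_edge using aC bC by auto
  have "face_perm \<rho> d = face_perm (delete_edge_rotation \<rho> a b) d" if "d \<in> ?S" for d
  proof -
    have d: "d \<in> darts E" "fst d \<in> ?C" using that unfolding component_darts_def by auto
    then have "snd d \<in> ?C" using component_edge_closed[OF sg] dart_edge by blast
    then have "fst (\<rho> (snd d, fst d)) \<notin> {a, b}"
      using rotation_system_fst[OF rs dart_reverse[OF d(1)]] aC bC by auto
    then show ?thesis
      unfolding face_perm_def delete_edge_rotation_def remove_from_cycle_def by auto
  qed
  then have "orbits (face_perm (delete_edge_rotation \<rho> a b)) ?S = orbits (face_perm \<rho>) ?S"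
    using orbits_cong[OF _ face_perm_component_darts[OF sg rs]] by metis
  then show ?thesis unfolding euler_char_def edges S' by simp
qed

lemma planar_embedding_delete_edge_iff:
  assumes sg: "simple_graph V E" and rs: "rotation_system E \<rho>" and ab: "{a, b} \<in> E"
    and "\<rho> (a, b) \<noteq> (a, b)" "\<rho> (b, a) \<noteq> (b, a)" "(b, a) \<notin> face_of \<rho> (a, b)"
    and "(a, b) \<in> {(x, y). adj (E - {{a, b}}) x y}\<^sup>*"
  shows "planar_embedding V (E - {{a, b}}) (delete_edge_rotation \<rho> a b) \<longleftrightarrow> planar_embedding V E \<rho>"
proof -
  have "euler_char (E - {{a, b}}) (delete_edge_rotation \<rho> a b) (component V E v)
      = euler_char E \<rho> (component V E v)" for v
    using euler_char_delete_edge_same_component[OF assms(1-6)]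
      euler_char_delete_edge_other_component[OF sg rs ab] by blast
  then show ?thesis
    unfolding planar_embedding_iff_euler_char[OF sg] planar_embedding_iff_euler_char[OF simple_graph_Diff[OF sg]]
    using rs rotation_system_delete_edge[OF sg rs ab] degree_pos_delete_edge[OF assms(1-5)]
      component_delete_edge[OF ab assms(7)] by simp
qed

lemma planar_embedding_cong:
  assumes sg: "simple_graph V E" and pe: "planar_embedding V E \<rho>"
    and rs: "rotation_system E \<sigma>" and eq: "\<forall>d\<in>darts E. \<sigma> d = \<rho> d"
  shows "planar_embedding V E \<sigma>"
proof -
  have rs\<rho>: "rotation_system E \<rho>" using pe unfolding planar_embedding_def by simp
  have "euler_char E \<sigma> (component V E v) = euler_char E \<rho> (component V E v)" for v
  proof -
    have "face_perm \<rho> d = face_perm \<sigma> d" if "d \<in> darts E" for d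
      using eq dart_reverse[OF that] unfolding face_perm_def by simp
    then have "\<forall>d\<in>component_darts E (component V E v). face_perm \<rho> d = face_perm \<sigma> d"
      unfolding component_darts_def by simp
    from orbits_cong[OF this face_perm_component_darts[OF sg rs\<rho>]] show ?thesis
      unfolding euler_char_def by simp
  qed
  then show ?thesis using pe rs unfolding planar_embedding_iff_euler_char[OF sg] by simp
qed

lemma rotation_system_insert_edge:
  assumes sg: "simple_graph V E" and rs: "rotation_system (E - {{a, b}}) \<rho>" and ab: "{a, b} \<in> E"
    and p: "perm_on \<sigma> (darts E)" and tails: "\<forall>d\<in>darts E. fst (\<sigma> d) = fst d"
    and na: "\<sigma> (a, b) \<noteq> (a, b)" and nb: "\<sigma> (b, a) \<noteq> (b, a)"
    and eq: "\<forall>d\<in>darts (E - {{a, b}}). delete_edge_rotation \<sigma> a b d = \<rho> d"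
  shows "rotation_system E \<sigma>"
proof -
  let ?D = "darts (E - {{a, b}})"
  have "a \<noteq> b" using simple_graph_edge_neq[OF sg ab] .
  then have abD: "(a, b) \<in> darts E" "(b, a) \<in> darts E" "(a, b) \<noteq> (b, a)"
    using ab by (auto simp: darts_iff insert_commute)
  have D: "?D = darts E - {(a, b), (b, a)}" by (simp add: darts_Diff_edge)
  have orbit_old: "orbit \<rho> e \<subseteq> orbit \<sigma> e" if "e \<in> ?D" for e
  proof -
    have "perm_on (delete_edge_rotation \<sigma> a b) ?D"
      unfolding delete_edge_rotation_def D using perm_on_remove_from_cycle_twice[OF p abD] .
    then have "orbit \<rho> e = orbit (delete_edge_rotation \<sigma> a b) e"
      using orbit_cong[OF eq _ that] unfolding perm_on_def by simp
    also have "\<dots> = orbit \<sigma> e - {(a, b), (b, a)}"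
      unfolding delete_edge_rotation_def using orbit_remove_from_cycle_twice[OF p abD] that D by simp
    finally show ?thesis by blast
  qed
  have old_dart: "\<exists>e\<in>?D. fst e = fst d \<and> e \<in> orbit \<sigma> d" if "d \<in> darts E" for d
  proof (cases "d \<in> {(a, b), (b, a)}")
    case True
    then have "\<sigma> d \<notin> {(a, b), (b, a)}" using tails na nb abD by auto
    then show ?thesis using True perm_on_in[OF p that] tails that D
      by (intro bexI[of _ "\<sigma> d"]) (auto intro: orbit_step)
  next
    case False
    then show ?thesis using that D by auto
  qed
  have "d' \<in> orbit \<sigma> d" if dd: "d \<in> darts E" "d' \<in> darts E" "fst d = fst d'" for d d'
  proof -
    obtain e where e: "e \<in> ?D" "fst e = fst d" "e \<in> orbit \<sigma> d" using old_dart[OF dd(1)] by blast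
    obtain e' where e': "e' \<in> ?D" "fst e' = fst d'" "e' \<in> orbit \<sigma> d'" using old_dart[OF dd(2)] by blast
    have "e' \<in> orbit \<rho> e" using rotation_system_orbit[OF rs e(1) e'(1)] e e' dd(3) by simp
    then have "e' \<in> orbit \<sigma> e" using orbit_old[OF e(1)] by blast
    moreover have "d' \<in> orbit \<sigma> e'" using orbit_sym[OF p dd(2) e'(3)] .
    ultimately show ?thesis using e(3) orbit_trans by metis
  qed
  then show ?thesis
    using p tails perm_on_iff_bij_betw[OF finite_darts[OF sg]] unfolding rotation_system_def orbit_iff by blast
qed

definition insert_edge_rotation ::
  "('a \<times> 'a \<Rightarrow> 'a \<times> 'a) \<Rightarrow> 'a \<Rightarrow> 'a \<Rightarrow> 'a \<times> 'a \<Rightarrow> 'a \<times> 'a \<Rightarrow> 'a \<times> 'a \<Rightarrow> 'a \<times> 'a" where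
  "insert_edge_rotation \<rho> a b p q = swap_images (swap_images (\<rho>((a, b) := (a, b), (b, a) := (b, a))) p (a, b)) q (b, a)"

context
  fixes E :: "'a set set" and \<rho> :: "'a \<times> 'a \<Rightarrow> 'a \<times> 'a" and a b :: 'a and p q :: "'a \<times> 'a"
  assumes new: "a \<noteq> b" "{a, b} \<notin> E" and p: "p \<in> darts E" "fst p = a" and q: "q \<in> darts E" "fst q = b"
begin

lemma insert_edge_rotation_apply:
  shows "insert_edge_rotation \<rho> a b p q p = (a, b)" "insert_edge_rotation \<rho> a b p q (a, b) = \<rho> p"
    and "insert_edge_rotation \<rho> a b p q q = (b, a)" "insert_edge_rotation \<rho> a b p q (b, a) = \<rho> q"
    and "d \<notin> {p, q, (a, b), (b, a)} \<Longrightarrow> insert_edge_rotation \<rho> a b p q d = \<rho> d"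
proof -
  have "(a, b) \<notin> darts E" "(b, a) \<notin> darts E" using new by (auto simp: darts_iff insert_commute)
  then have "p \<notin> {q, (a, b), (b, a)}" "q \<notin> {(a, b), (b, a)}" "(a, b) \<noteq> (b, a)"
    using p q new by auto
  then show "insert_edge_rotation \<rho> a b p q p = (a, b)" "insert_edge_rotation \<rho> a b p q (a, b) = \<rho> p"
    "insert_edge_rotation \<rho> a b p q q = (b, a)" "insert_edge_rotation \<rho> a b p q (b, a) = \<rho> q"
    "d \<notin> {p, q, (a, b), (b, a)} \<Longrightarrow> insert_edge_rotation \<rho> a b p q d = \<rho> d"
    unfolding insert_edge_rotation_def swap_images_def by auto
qed

lemma perm_on_insert_edge_rotation:
  assumes "simple_graph V E" "rotation_system E \<rho>"
  shows "perm_on (insert_edge_rotation \<rho> a b p q) (darts (insert {a, b} E))"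
proof -
  have D: "darts (insert {a, b} E) = insert (a, b) (insert (b, a) (darts E))"
    using new unfolding darts_def by (auto simp: doubleton_eq_iff)
  have "(a, b) \<notin> darts E" "(b, a) \<notin> darts E" using new by (auto simp: darts_iff insert_commute)
  then have "perm_on (\<rho>((b, a) := (b, a), (a, b) := (a, b))) (darts (insert {a, b} E))"
    unfolding D using new
    by (intro perm_on_fun_upd_fixpoint rotation_system_perm_on[OF assms]) auto
  then show ?thesis
    unfolding insert_edge_rotation_def using p q D new
    by (simp add: fun_upd_twist perm_on_swap_images)
qed

lemma insert_edge_rotation_old_darts:
  assumes rs: "rotation_system E \<rho>"
  shows "\<rho> p \<notin> {(a, b), (b, a)}" "\<rho> q \<notin> {(a, b), (b, a)}"
proof -
  have "d \<notin> {(a, b), (b, a)}" if "d \<in> darts E" for d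
    using that new by (auto simp: darts_iff insert_commute)
  then show "\<rho> p \<notin> {(a, b), (b, a)}" "\<rho> q \<notin> {(a, b), (b, a)}"
    using rotation_system_in[OF rs] p(1) q(1) by blast+
qed

lemma fst_insert_edge_rotation:
  assumes rs: "rotation_system E \<rho>" and d: "d \<in> darts (insert {a, b} E)"
  shows "fst (insert_edge_rotation \<rho> a b p q d) = fst d"
proof (cases "d \<in> {p, q, (a, b), (b, a)}")
  case True
  then show ?thesis using insert_edge_rotation_apply(1-4) p q
      rotation_system_fst[OF rs p(1)] rotation_system_fst[OF rs q(1)] by auto
next
  case False
  then have "d \<in> darts E" using d unfolding darts_def by (auto simp: doubleton_eq_iff)
  then show ?thesis using insert_edge_rotation_apply(5)[OF False] rotation_system_fst[OF rs] by simp
qed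

lemma delete_insert_edge_rotation:
  assumes rs: "rotation_system E \<rho>" and d: "d \<in> darts E"
  shows "delete_edge_rotation (insert_edge_rotation \<rho> a b p q) a b d = \<rho> d"
proof -
  have "d \<notin> {(a, b), (b, a)}" "\<rho> d \<notin> {(a, b), (b, a)}"
    using d rotation_system_in[OF rs d] new by (auto simp: darts_iff insert_commute)
  then show ?thesis
    using insert_edge_rotation_apply insert_edge_rotation_old_darts[OF rs] new(1)
    by (cases "d = p"; cases "d = q") (auto simp: delete_edge_rotation_apply)
qed

end

(* Insertion is reduced to deletion: removing the new edge again gives back \<rho>. *)
lemma planar_embedding_insert_edge:
  assumes sg: "simple_graph V E" and pe: "planar_embedding V E \<rho>"
    and new: "a \<in> V" "b \<in> V" "a \<noteq> b" "{a, b} \<notin> E"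
    and p: "p \<in> darts E" "fst p = a" and q: "q \<in> darts E" "fst q = b"
    and path: "(a, b) \<in> {(x, y). adj E x y}\<^sup>*"
    and face: "(b, a) \<notin> face_of (insert_edge_rotation \<rho> a b p q) (a, b)"
  shows "planar_embedding V (insert {a, b} E) (insert_edge_rotation \<rho> a b p q)"
proof -
  let ?E1 = "insert {a, b} E" and ?\<sigma> = "insert_edge_rotation \<rho> a b p q"
  have rs: "rotation_system E \<rho>" using pe unfolding planar_embedding_def by simp
  have sg1: "simple_graph V ?E1" using sg new unfolding simple_graph_def by auto
  have E: "?E1 - {{a, b}} = E" using new by auto
  have eq: "\<forall>d\<in>darts (?E1 - {{a, b}}). delete_edge_rotation ?\<sigma> a b d = \<rho> d"
    using delete_insert_edge_rotation[OF new(3,4) p q rs] E by simp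
  have new_darts: "?\<sigma> (a, b) \<noteq> (a, b)" "?\<sigma> (b, a) \<noteq> (b, a)"
    using insert_edge_rotation_apply(2,4)[OF new(3,4) p q] insert_edge_rotation_old_darts[OF new(3,4) p q rs]
    by auto
  have rs1: "rotation_system ?E1 ?\<sigma>"
    using rotation_system_insert_edge[where a = a and b = b and \<rho> = \<rho>, OF sg1 _ _
        perm_on_insert_edge_rotation[OF new(3,4) p q sg rs]] fst_insert_edge_rotation[OF new(3,4) p q rs]
      E rs new_darts eq by simp
  have "planar_embedding V (?E1 - {{a, b}}) (delete_edge_rotation ?\<sigma> a b)"
    using planar_embedding_cong[OF sg pe] rotation_system_delete_edge[OF sg1 rs1, of a b] eq E by simp
  then show ?thesis
    using planar_embedding_delete_edge_iff[OF sg1 rs1, of a b] new_darts face path E by auto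
qed

section \<open>Relabelling vertices\<close>

(* The minimality hypothesis only speaks about graphs on nat, so a reduced graph is copied there. *)
locale relabeling =
  fixes V :: "'a set" and E :: "'a set set" and f :: "'a \<Rightarrow> 'b"
  assumes simple: "simple_graph V E" and inj: "inj_on f V"
begin

abbreviation "E' \<equiv> (`) f ` E"

lemma edges_subset: "e \<in> E \<Longrightarrow> e \<subseteq> V"
  using simple unfolding simple_graph_def by auto

lemma edge_image_iff: "a \<in> V \<Longrightarrow> b \<in> V \<Longrightarrow> {f a, f b} \<in> E' \<longleftrightarrow> {a, b} \<in> E"
proof
  assume ab: "a \<in> V" "b \<in> V" "{f a, f b} \<in> E'"
  then obtain e where e: "e \<in> E" "f ` {a, b} = f ` e" by auto
  have "{a, b} \<subseteq> V" "e \<subseteq> V" using ab(1,2) edges_subset[OF e(1)] by auto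
  then have "{a, b} = e" using e(2) inj_on_image_eq_iff[OF inj] by blast
  then show "{a, b} \<in> E" using e by simp
qed (metis image_empty image_eqI image_insert)

lemma edge_image_cases:
  assumes "{x, y} \<in> E'"
  obtains a b where "a \<in> V" "b \<in> V" "x = f a" "y = f b" "{a, b} \<in> E"
proof -
  obtain e where e: "e \<in> E" "{x, y} = f ` e" using assms by blast
  then obtain a b where "a \<in> e" "b \<in> e" "x = f a" "y = f b" by (metis imageE insertI1 insert_commute)
  moreover have "a \<in> V" "b \<in> V" using calculation(1,2) edges_subset[OF e(1)] by auto
  ultimately show thesis using that edge_image_iff e by (metis image_eqI)
qed

lemma simple_graph_image: "simple_graph (f ` V) E'"
proof -
  have "card (f ` e) = 2" if "e \<in> E" for e
    using simple that card_image inj_on_subset[OF inj edges_subset[OF that]]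
    unfolding simple_graph_def by metis
  then show ?thesis using simple edges_subset unfolding simple_graph_def by auto
qed

lemma inj_on_edge_image: "inj_on ((`) f) E"
  using inj_on_image_Pow[OF inj] edges_subset by (meson PowI inj_on_subset subsetI)

lemma card_edges_image: "card E' = card E"
  using inj_on_edge_image by (rule card_image)

lemma neighbours_image: "y \<in> V \<Longrightarrow> {z. {z, f y} \<in> E'} = f ` {z. {z, y} \<in> E}"
  using edge_image_iff simple_graph_edge_in[OF simple] inj
  by (auto elim!: edge_image_cases simp: inj_on_eq_iff)

lemma degree_image: "y \<in> V \<Longrightarrow> degree E' (f y) = degree E y"
  unfolding degree_def neighbours_image
  using simple_graph_edge_in[OF simple] inj_on_subset[OF inj]
  by (intro card_image) (meson mem_Collect_eq subsetI)

lemma dist2_coloring_comp: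
  assumes "dist2_coloring (f ` V) E' k c"
  shows "dist2_coloring V E k (c \<circ> f)"
  unfolding dist2_coloring_def
proof (intro conjI ballI impI)
  fix y z assume yz: "y \<in> V" "z \<in> V" "y \<noteq> z \<and> (adj E y z \<or> (\<exists>w. adj E y w \<and> adj E w z))"
  have adj_image: "adj E' (f s) (f t)" if "adj E s t" for s t
    using that simple_graph_edge_in[OF simple] edge_image_iff unfolding adj_def by blast
  have "f y \<noteq> f z" using yz inj by (meson inj_on_eq_iff)
  moreover have "adj E' (f y) (f z) \<or> (\<exists>w. adj E' (f y) w \<and> adj E' w (f z))"
    using yz adj_image by blast
  ultimately show "(c \<circ> f) y \<noteq> (c \<circ> f) z"
    using assms yz(1,2) unfolding dist2_coloring_def by auto
qed (use assms in \<open>auto simp: dist2_coloring_def\<close>)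

lemma component_image:
  assumes y: "y \<in> V"
  shows "component (f ` V) E' (f y) = f ` component V E y"
proof
  show "component (f ` V) E' (f y) \<subseteq> f ` component V E y"
  proof
    fix z' assume "z' \<in> component (f ` V) E' (f y)"
    then have "(f y, z') \<in> {(x, y). adj E' x y}\<^sup>*" unfolding component_def by simp
    then have "\<exists>z\<in>component V E y. z' = f z"
    proof (induction rule: rtrancl_induct)
      case base
      then show ?case using y unfolding component_def by blast
    next
      case (step s t)
      then obtain z where z: "z \<in> component V E y" "s = f z" by blast
      then have "{f z, t} \<in> E'" using step(2) unfolding adj_def by simp
      then obtain z1 z2 where "z1 \<in> V" "z2 \<in> V" "f z = f z1" "t = f z2" "{z1, z2} \<in> E"
        by (rule edge_image_cases)
      moreover have "z \<in> V" using z(1) unfolding component_def by simp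
      ultimately show ?case using component_edge_closed[OF simple z(1)] inj by (metis inj_onD)
    qed
    then show "z' \<in> f ` component V E y" by blast
  qed
next
  show "f ` component V E y \<subseteq> component (f ` V) E' (f y)"
  proof
    fix z' assume "z' \<in> f ` component V E y"
    then obtain z where z: "z' = f z" "z \<in> V" "(y, z) \<in> {(x, y). adj E x y}\<^sup>*"
      unfolding component_def by blast
    from z(3) have "(f y, f z) \<in> {(x, y). adj E' x y}\<^sup>*"
    proof (induction rule: rtrancl_induct)
      case (step s t)
      then have "{s, t} \<in> E" unfolding adj_def by simp
      then have "{f s, f t} \<in> E'" by (metis image_empty image_eqI image_insert)
      then show ?case using step(3) unfolding adj_def by (simp add: rtrancl_into_rtrancl)
    qed simp
    then show "z' \<in> component (f ` V) E' (f y)" using z unfolding component_def by blast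
  qed
qed

abbreviation "F \<equiv> map_prod f f"

lemma inj_on_darts: "inj_on F (darts E)"
proof -
  have "darts E \<subseteq> V \<times> V" using simple_graph_edge_in[OF simple] unfolding darts_def by auto
  then show ?thesis using map_prod_inj_on[OF inj inj] inj_on_subset by blast
qed

lemma darts_image: "darts E' = F ` darts E"
proof
  show "darts E' \<subseteq> F ` darts E"
  proof
    fix d assume "d \<in> darts E'"
    then obtain x y where d: "d = (x, y)" "{x, y} \<in> E'" "x \<noteq> y" unfolding darts_def by auto
    then obtain a b where "a \<in> V" "b \<in> V" "x = f a" "y = f b" "{a, b} \<in> E"
      by (elim edge_image_cases)
    then show "d \<in> F ` darts E" using d unfolding darts_def by force
  qed
next
  show "F ` darts E \<subseteq> darts E'"
  proof (rule image_subsetI)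
    fix d assume "d \<in> darts E"
    then obtain a b where d: "d = (a, b)" "{a, b} \<in> E" "a \<noteq> b" unfolding darts_def by auto
    then have "f a \<noteq> f b" using simple_graph_edge_in[OF simple d(2)] inj by (meson inj_on_eq_iff)
    moreover have "{f a, f b} \<in> E'" using d(2) by (metis image_empty image_eqI image_insert)
    ultimately show "F d \<in> darts E'" using d unfolding darts_def by simp
  qed
qed

definition relabel_rotation :: "('a \<times> 'a \<Rightarrow> 'a \<times> 'a) \<Rightarrow> 'b \<times> 'b \<Rightarrow> 'b \<times> 'b" where
  "relabel_rotation \<rho> d = F (\<rho> (inv_into (darts E) F d))"

lemma relabel_rotation_apply: "d \<in> darts E \<Longrightarrow> relabel_rotation \<rho> (F d) = F (\<rho> d)"
  unfolding relabel_rotation_def using inv_into_f_f[OF inj_on_darts] by simp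

lemma face_perm_relabel_rotation:
  "d \<in> darts E \<Longrightarrow> face_perm (relabel_rotation \<rho>) (F d) = F (face_perm \<rho> d)"
  unfolding face_perm_def using relabel_rotation_apply[OF dart_reverse, of d] by (cases d) simp

lemma rotation_system_relabel:
  assumes rs: "rotation_system E \<rho>"
  shows "rotation_system E' (relabel_rotation \<rho>)"
  unfolding rotation_system_def
proof (intro conjI ballI impI)
  have bij: "bij_betw F (darts E) (darts E')" using inj_on_darts darts_image unfolding bij_betw_def by simp
  have "bij_betw \<rho> (darts E) (darts E)" using rs unfolding rotation_system_def by simp
  then have "bij_betw (F \<circ> (\<rho> \<circ> inv_into (darts E) F)) (darts E') (darts E')"
    using bij_betw_trans[OF bij_betw_trans[OF bij_betw_inv_into[OF bij]] bij] by blast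
  then show "bij_betw (relabel_rotation \<rho>) (darts E') (darts E')"
    unfolding relabel_rotation_def comp_def .
next
  fix d' assume "d' \<in> darts E'"
  then obtain d where "d \<in> darts E" "d' = F d" unfolding darts_image by (elim imageE) simp
  then show "fst (relabel_rotation \<rho> d') = fst d'"
    using relabel_rotation_apply[of d \<rho>] rotation_system_fst[OF rs, of d] by (simp add: fst_map_prod)
next
  fix d1' d2' assume d': "d1' \<in> darts E'" "d2' \<in> darts E'" "fst d1' = fst d2'"
  obtain d1 where d1: "d1 \<in> darts E" "d1' = F d1" using d'(1) unfolding darts_image by (elim imageE) simp
  obtain d2 where d2: "d2 \<in> darts E" "d2' = F d2" using d'(2) unfolding darts_image by (elim imageE) simp
  note d = d1 d2
  then have "fst d1 \<in> V" "fst d2 \<in> V"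
    using simple_graph_edge_in[OF simple] dart_edge by blast+
  then have "fst d1 = fst d2" using d d'(3) inj by (simp add: map_prod_def split_beta inj_on_eq_iff)
  then have "d2 \<in> orbit \<rho> d1" using rotation_system_orbit[OF rs d(1,3)] by simp
  moreover have "orbit (relabel_rotation \<rho>) (F d1) = F ` orbit \<rho> d1"
    using orbit_conj[of "darts E" "relabel_rotation \<rho>" F \<rho> d1] relabel_rotation_apply
      rotation_system_in[OF rs] d(1) by blast
  ultimately show "\<exists>n. (relabel_rotation \<rho> ^^ n) d1' = d2'"
    using d unfolding orbit_iff[symmetric] by simp
qed

lemma card_edges_within_image:
  assumes CV: "C \<subseteq> V"
  shows "card {e\<in>E'. e \<subseteq> f ` C} = card {e\<in>E. e \<subseteq> C}"
proof -
  have "{e\<in>E'. e \<subseteq> f ` C} = (`) f ` {e\<in>E. e \<subseteq> C}"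
  proof
    show "{e\<in>E'. e \<subseteq> f ` C} \<subseteq> (`) f ` {e\<in>E. e \<subseteq> C}"
    proof
      fix e' assume "e' \<in> {e\<in>E'. e \<subseteq> f ` C}"
      then obtain e where e: "e \<in> E" "e' = f ` e" "f ` e \<subseteq> f ` C" by auto
      then have "e \<subseteq> C" using edges_subset[OF e(1)] CV inj_on_image_mem_iff[OF inj] by blast
      then show "e' \<in> (`) f ` {e\<in>E. e \<subseteq> C}" using e by blast
    qed
  qed auto
  moreover have "inj_on ((`) f) {e\<in>E. e \<subseteq> C}"
    by (rule inj_on_subset[OF inj_on_edge_image]) auto
  ultimately show ?thesis by (simp add: card_image)
qed

lemma component_darts_image:
  assumes CV: "C \<subseteq> V"
  shows "component_darts E' (f ` C) = F ` component_darts E C"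
proof -
  have "fst (F d) \<in> f ` C \<longleftrightarrow> fst d \<in> C" if "d \<in> darts E" for d
    using inj_on_image_mem_iff[OF inj _ CV] simple_graph_edge_in[OF simple dart_edge[OF that]]
    by (simp add: fst_map_prod)
  then have "{d\<in>darts E. fst (F d) \<in> f ` C} = component_darts E C" unfolding component_darts_def by blast
  moreover have "{d'\<in>F ` darts E. fst d' \<in> f ` C} = F ` {d\<in>darts E. fst (F d) \<in> f ` C}"
    by (auto simp del: map_prod_simp)
  ultimately show ?thesis unfolding component_darts_def darts_image by simp
qed

lemma euler_char_relabel:
  assumes rs: "rotation_system E \<rho>" and y: "y \<in> V"
  shows "euler_char E' (relabel_rotation \<rho>) (f ` component V E y) = euler_char E \<rho> (component V E y)"
proof -
  let ?C = "component V E y" and ?S = "component_darts E (component V E y)"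
  have CV: "?C \<subseteq> V" unfolding component_def by auto
  have "\<forall>d\<in>?S. face_perm (relabel_rotation \<rho>) (F d) = F (face_perm \<rho> d)"
    using face_perm_relabel_rotation unfolding component_darts_def by simp
  then have "orbit (face_perm (relabel_rotation \<rho>)) (F d) = F ` orbit (face_perm \<rho>) d" if "d \<in> ?S" for d
    using orbit_conj[OF _ face_perm_component_darts[OF simple rs] that] by blast
  then have "orbits (face_perm (relabel_rotation \<rho>)) (F ` ?S) = (`) F ` orbits (face_perm \<rho>) ?S"
    unfolding orbits_def image_image by (intro image_cong) auto
  moreover have "inj_on ((`) F) (orbits (face_perm \<rho>) ?S)"
  proof -
    have "orbits (face_perm \<rho>) ?S \<subseteq> Pow (darts E)"
      using orbit_subset_invariant[OF face_perm_component_darts[OF simple rs]]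
      unfolding orbits_def component_darts_def by blast
    then show ?thesis using inj_on_image_Pow[OF inj_on_darts] inj_on_subset by blast
  qed
  ultimately have "card (orbits (face_perm (relabel_rotation \<rho>)) (F ` ?S)) = card (orbits (face_perm \<rho>) ?S)"
    by (simp add: card_image)
  moreover have "card (f ` ?C) = card ?C" using inj_on_subset[OF inj CV] by (rule card_image)
  ultimately show ?thesis
    unfolding euler_char_def component_darts_image[OF CV] card_edges_within_image[OF CV] by simp
qed

lemma planar_embedding_relabel:
  assumes "planar_embedding V E \<rho>"
  shows "planar_embedding (f ` V) E' (relabel_rotation \<rho>)"
proof -
  have rs: "rotation_system E \<rho>" using assms unfolding planar_embedding_def by simp
  show ?thesis
    unfolding planar_embedding_iff_euler_char[OF simple_graph_image]
    using assms rotation_system_relabel[OF rs] euler_char_relabel[OF rs] component_image degree_image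
    unfolding planar_embedding_iff_euler_char[OF simple] by auto
qed

end

section \<open>Distance-2 colourings\<close>

definition dist2_near :: "'a set set \<Rightarrow> 'a \<Rightarrow> 'a \<Rightarrow> bool" where
  "dist2_near E y z \<longleftrightarrow> adj E y z \<or> (\<exists>t. adj E y t \<and> adj E t z)"

lemma dist2_near_sym: "dist2_near E y z \<Longrightarrow> dist2_near E z y"
  unfolding dist2_near_def adj_def by (auto simp: insert_commute)

lemma dist2_near_star:
  assumes "{u, w} \<in> E" "{u, x} \<in> E" "y \<in> {u, w, x}" "z \<in> {u, w, x}" "y \<noteq> z"
  shows "dist2_near E y z"
proof -
  have "dist2_near E u w" "dist2_near E u x" "dist2_near E w x"
    using assms(1,2) unfolding dist2_near_def adj_def by (auto simp: insert_commute)
  then show ?thesis using assms(3-5) dist2_near_sym by auto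
qed

lemma dist2_coloring_iff:
  "dist2_coloring V E k c \<longleftrightarrow>
     (\<forall>v\<in>V. c v < k) \<and> (\<forall>y\<in>V. \<forall>z\<in>V. y \<noteq> z \<and> dist2_near E y z \<longrightarrow> c y \<noteq> c z)"
  unfolding dist2_coloring_def dist2_near_def ..

lemma chi2_le: "dist2_coloring V E k c \<Longrightarrow> chi2 V E \<le> k"
  unfolding chi2_def by (rule Least_le) blast

lemma dist2_coloring_chi2:
  assumes "finite V"
  obtains c where "dist2_coloring V E (chi2 V E) c"
proof -
  obtain g :: "'a \<Rightarrow> nat" where g: "inj_on g V" "g ` V = {0..<card V}"
    using ex_bij_betw_finite_nat[OF assms] unfolding bij_betw_def by blast
  have "dist2_coloring V E (card V) g"
    unfolding dist2_coloring_iff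
  proof (intro conjI ballI impI)
    fix y assume "y \<in> V"
    then have "g y \<in> {0..<card V}" using g(2) by blast
    then show "g y < card V" by simp
  next
    fix y z assume "y \<in> V" "z \<in> V" "y \<noteq> z \<and> dist2_near E y z"
    then show "g y \<noteq> g z" using inj_on_contraD[OF g(1)] by blast
  qed
  then have "\<exists>k c. dist2_coloring V E k c" by blast
  from LeastI_ex[OF this] show thesis using that unfolding chi2_def by blast
qed

lemma dist2_coloring_extend:
  assumes sg: "simple_graph V E" and col: "dist2_coloring V E' k c" and v: "v \<in> V"
    and keep: "\<And>y z. y \<noteq> v \<Longrightarrow> z \<noteq> v \<Longrightarrow> y \<noteq> z \<Longrightarrow> dist2_near E y z \<Longrightarrow> dist2_near E' y z"
    and few: "card {z. z \<noteq> v \<and> dist2_near E v z} < k"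
  obtains c' where "dist2_coloring V E k c'"
proof -
  let ?N = "{z. z \<noteq> v \<and> dist2_near E v z}"
  have "?N \<subseteq> V" using simple_graph_edge_in[OF sg] unfolding dist2_near_def adj_def by blast
  then have fin: "finite ?N" using sg finite_subset unfolding simple_graph_def by blast
  have "\<not> {0..<k} \<subseteq> c ` ?N"
  proof
    assume "{0..<k} \<subseteq> c ` ?N"
    then have "k \<le> card (c ` ?N)" using card_mono[OF finite_imageI[OF fin]] by fastforce
    then show False using few card_image_le[OF fin, of c] by simp
  qed
  then obtain free where "free \<in> {0..<k}" "free \<notin> c ` ?N" by blast
  then have free: "free < k" "free \<notin> c ` ?N" by auto
  have "dist2_coloring V E k (c(v := free))"
    unfolding dist2_coloring_iff
  proof (intro conjI ballI impI)
    fix y z assume yz: "y \<in> V" "z \<in> V" "y \<noteq> z \<and> dist2_near E y z"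
    consider "y = v" | "z = v" | "y \<noteq> v" "z \<noteq> v" by blast
    then show "(c(v := free)) y \<noteq> (c(v := free)) z"
    proof cases
      case 1
      then show ?thesis using yz free(2) by auto
    next
      case 2
      then show ?thesis using yz free(2) dist2_near_sym[of E y z] by auto
    next
      case 3
      then show ?thesis using yz keep[of y z] col unfolding dist2_coloring_iff by simp
    qed
  next
    fix y assume "y \<in> V"
    then show "(c(v := free)) y < k" using free(1) col unfolding dist2_coloring_iff by simp
  qed
  then show thesis by (rule that)
qed

lemma dist2_coloring_mono: "dist2_coloring V E k c \<Longrightarrow> k \<le> k' \<Longrightarrow> dist2_coloring V E k' c"
  unfolding dist2_coloring_def by fastforce

lemma dist2_colorable_if_smaller:
  fixes V :: "'a set" and E :: "'a set set" and W :: "'b set"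
  assumes min: "\<forall>(V' :: nat set) E'. simple_graph V' E' \<and> planar V' E' \<and> max_degree_le V' E' 4
           \<and> chi2 V' E' > 12 \<longrightarrow>
           \<not> (card V' < card V \<or> (card V' = card V \<and> card E' < card E))"
    and sg: "simple_graph W F" and pl: "planar W F" and md: "max_degree_le W F 4"
    and smaller: "card W < card V \<or> (card W = card V \<and> card F < card E)"
  obtains c where "dist2_coloring W F 12 c"
proof -
  have "finite W" using sg unfolding simple_graph_def by simp
  then obtain f :: "'b \<Rightarrow> nat" where "inj_on f W"
    using ex_bij_betw_finite_nat unfolding bij_betw_def by blast
  then interpret relabeling W F f using sg by unfold_locales
  have "simple_graph (f ` W) E'" by (rule simple_graph_image)
  moreover have "planar (f ` W) E'"
    using pl planar_embedding_relabel unfolding planar_def by blast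
  moreover have "max_degree_le (f ` W) E' 4"
    using md degree_image unfolding max_degree_le_def by auto
  moreover have "card (f ` W) = card W" using inj by (rule card_image)
  ultimately have "chi2 (f ` W) E' \<le> 12"
    using min[rule_format, of "f ` W" E'] smaller card_edges_image by fastforce
  moreover obtain c where "dist2_coloring (f ` W) E' (chi2 (f ` W) E') c"
    using dist2_coloring_chi2 \<open>finite W\<close> by blast
  ultimately have "dist2_coloring W F 12 (c \<circ> f)"
    using dist2_coloring_comp dist2_coloring_mono by blast
  then show thesis by (rule that)
qed

(* Vertices other than v that are within distance 2 in E stay so in E', hence a colouring
   of E' is a colouring of E away from v. *)
definition dist2_reduction :: "'a set \<Rightarrow> 'a set set \<Rightarrow> 'a \<Rightarrow> 'a set set \<Rightarrow> bool" where
  "dist2_reduction V E v E' \<longleftrightarrow>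
     simple_graph V E' \<and> planar V E' \<and> max_degree_le V E' 4 \<and> card E' < card E \<and>
     (\<forall>y z. {y, z} \<in> E \<longrightarrow> y \<noteq> v \<longrightarrow> z \<noteq> v \<longrightarrow> {y, z} \<in> E') \<and>
     (\<forall>y z. {y, v} \<in> E \<longrightarrow> {z, v} \<in> E \<longrightarrow> y \<noteq> z \<longrightarrow> dist2_near E' y z)"

lemma dist2_near_reduction:
  assumes red: "dist2_reduction V E v E'" and yz: "y \<noteq> v" "z \<noteq> v" "y \<noteq> z" "dist2_near E y z"
  shows "dist2_near E' y z"
proof (cases "adj E y z")
  case True
  then show ?thesis using red yz(1,2) unfolding dist2_reduction_def dist2_near_def adj_def by blast
next
  case False
  then obtain t where t: "{y, t} \<in> E" "{t, z} \<in> E" using yz(4) unfolding dist2_near_def adj_def by blast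
  show ?thesis
  proof (cases "t = v")
    case True
    then show ?thesis using red t yz(3) unfolding dist2_reduction_def by (simp add: insert_commute)
  next
    case False
    then have "{y, t} \<in> E'" "{t, z} \<in> E'" using red t yz(1,2) unfolding dist2_reduction_def by blast+
    then show ?thesis unfolding dist2_near_def adj_def by blast
  qed
qed

lemma minimal_counterexample_no_dist2_reduction:
  fixes V :: "'a set" and E :: "'a set set"
  assumes min: "\<forall>(V' :: nat set) E'. simple_graph V' E' \<and> planar V' E' \<and> max_degree_le V' E' 4
           \<and> chi2 V' E' > 12 \<longrightarrow>
           \<not> (card V' < card V \<or> (card V' = card V \<and> card E' < card E))"
    and sg: "simple_graph V E" and chi: "chi2 V E > 12"
    and v: "v \<in> V" and few: "card {z. z \<noteq> v \<and> dist2_near E v z} < 12"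
  shows "\<not> dist2_reduction V E v E'"
proof
  assume red: "dist2_reduction V E v E'"
  then obtain c where "dist2_coloring V E' 12 c"
    using dist2_colorable_if_smaller[OF min] unfolding dist2_reduction_def by blast
  then obtain c' where "dist2_coloring V E 12 c'"
    using dist2_coloring_extend[OF sg _ v dist2_near_reduction[OF red] few] by blast
  then show False using chi2_le chi by fastforce
qed

section \<open>A 3-vertex on a triangular face\<close>

lemma triangular_face:
  assumes sg: "simple_graph V E" and rs: "rotation_system E \<rho>"
    and f: "f \<in> faces E \<rho>" "face_degree f = 3" "incident_face v f"
  obtains w u where "(v, w) \<in> darts E" "(w, u) \<in> darts E" "(u, v) \<in> darts E"
    "\<rho> (w, v) = (w, u)" "\<rho> (u, w) = (u, v)" "\<rho> (v, u) = (v, w)"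
proof -
  let ?p = "face_perm \<rho>"
  have pp: "perm_on ?p (darts E)" using perm_on_face_perm[OF sg rs] .
  obtain d0 where d0: "d0 \<in> darts E" "f = orbit ?p d0" using f(1) unfolding faces_def face_of_eq_orbit by blast
  obtain d where d: "d \<in> f" "fst d = v" using f(3) unfolding incident_face_def by blast
  then have dD: "d \<in> darts E" using perm_on_orbit_subset[OF pp d0(1)] d0(2) by blast
  have "orbit ?p d = orbit ?p d0" using orbit_eq[OF pp d0(1)] d(1) d0(2) by blast
  then have "(?p ^^ 3) d = d" using funpow_card_orbit[OF pp dD] f(2) d0(2) unfolding face_degree_def by simp
  then have cyc: "?p (?p (?p d)) = d" by (simp add: numeral_3_eq_3)
  define w where "w = snd d"
  define u where "u = snd (?p d)"
  have d_eq: "d = (v, w)" using d(2) unfolding w_def by (cases d) simp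
  have p1: "?p (v, w) = (w, u)"
    using face_perm_fst[OF rs dD] d_eq unfolding u_def by (cases "?p d") simp
  have D2: "(w, u) \<in> darts E" using face_perm_in[OF rs dD] p1 d_eq by simp
  have p2: "?p (w, u) = (u, v)"
    using face_perm_fst[OF rs D2] face_perm_fst[OF rs face_perm_in[OF rs D2]] cyc p1 d_eq
    by (cases "?p (w, u)") simp
  have p3: "?p (u, v) = (v, w)" using cyc p1 p2 d_eq by simp
  have "(v, w) \<in> darts E" "(u, v) \<in> darts E" using dD d_eq face_perm_in[OF rs D2] p2 by auto
  then show thesis using that D2 p1 p2 p3 unfolding face_perm_def by simp
qed

lemma degree3_vertex_on_triangle:
  assumes sg: "simple_graph V E" and rs: "rotation_system E \<rho>" and deg: "degree E v = 3"
    and f: "f \<in> faces E \<rho>" "face_degree f = 3" "incident_face v f"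
  obtains u w x where "{z. {z, v} \<in> E} = {u, w, x}" "distinct [u, w, x, v]" "{u, w} \<in> E"
    "\<rho> (v, x) = (v, u)" "\<rho> (v, u) = (v, w)" "\<rho> (w, v) = (w, u)" "\<rho> (u, w) = (u, v)"
proof -
  obtain w u where D: "(v, w) \<in> darts E" "(w, u) \<in> darts E" "(u, v) \<in> darts E"
    and rot: "\<rho> (w, v) = (w, u)" "\<rho> (u, w) = (u, v)" "\<rho> (v, u) = (v, w)"
    using triangular_face[OF sg rs f] .
  then have E: "{v, w} \<in> E" "{u, w} \<in> E" "{u, v} \<in> E" and neq: "v \<noteq> w" "w \<noteq> u" "u \<noteq> v"
    by (auto simp: darts_iff insert_commute)
  have "{u, w} \<subseteq> {z. {z, v} \<in> E}" using E by (auto simp: insert_commute)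
  then have "card ({z. {z, v} \<in> E} - {u, w}) = 1"
    using deg neq finite_neighbours[OF sg] unfolding degree_def by (simp add: card_Diff_subset)
  then obtain x where x: "{z. {z, v} \<in> E} - {u, w} = {x}" by (rule card_1_singletonE)
  then have N: "{z. {z, v} \<in> E} = {u, w, x}" and x: "x \<noteq> u" "x \<noteq> w"
    using \<open>{u, w} \<subseteq> _\<close> by auto
  have "x \<in> {z. {z, v} \<in> E}" unfolding N by simp
  then have xv: "x \<noteq> v" using simple_graph_edge_neq[OF sg] by simp
  have Dv: "(v, z) \<in> darts E \<longleftrightarrow> z \<in> {u, w, x}" for z
  proof -
    have "(v, z) \<in> darts E \<longleftrightarrow> z \<in> {z. {z, v} \<in> E}"
      using simple_graph_edge_neq[OF sg, of z v] by (auto simp: darts_iff insert_commute)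
    then show ?thesis unfolding N .
  qed
  obtain z where z: "\<rho> (v, x) = (v, z)" "z \<in> {u, w, x}"
    using rotation_system_in[OF rs] rotation_system_fst[OF rs] Dv by (metis fst_conv insertCI prod.collapse)
  have "z \<noteq> w"
    using perm_on_eq_iff[OF rotation_system_perm_on[OF sg rs], of "(v, x)" "(v, u)"] z rot(3) Dv x by auto
  moreover have "z \<noteq> x" using rotation_system_not_fixed[OF rs, of v x u] z Dv x by auto
  ultimately have "\<rho> (v, x) = (v, u)" using z by auto
  then show thesis using that N neq x xv E(2) rot by simp
qed

locale degree3_triangle =
  fixes V :: "'a set" and E :: "'a set set" and \<rho> :: "'a \<times> 'a \<Rightarrow> 'a \<times> 'a" and v u w x :: 'a
  assumes simple: "simple_graph V E" and planar: "planar_embedding V E \<rho>"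
    and max_degree: "max_degree_le V E 4"
    and neighbours: "{z. {z, v} \<in> E} = {u, w, x}" and distinct: "distinct [u, w, x, v]"
    and uw: "{u, w} \<in> E"
    and rot: "\<rho> (v, x) = (v, u)" "\<rho> (v, u) = (v, w)" "\<rho> (w, v) = (w, u)" "\<rho> (u, w) = (u, v)"
begin

lemma neq: "u \<noteq> w" "u \<noteq> x" "u \<noteq> v" "w \<noteq> x" "w \<noteq> v" "x \<noteq> v"
  "w \<noteq> u" "x \<noteq> u" "v \<noteq> u" "x \<noteq> w" "v \<noteq> w" "v \<noteq> x"
  using distinct by auto

lemma rotation: "rotation_system E \<rho>"
  using planar unfolding planar_embedding_def by simp

lemma config_edges: "{u, v} \<in> E" "{w, v} \<in> E" "{x, v} \<in> E" "{v, u} \<in> E" "{v, w} \<in> E" "{v, x} \<in> E" "{w, u} \<in> E"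
proof -
  have "u \<in> {z. {z, v} \<in> E}" "w \<in> {z. {z, v} \<in> E}" "x \<in> {z. {z, v} \<in> E}" unfolding neighbours by simp_all
  then show "{u, v} \<in> E" "{w, v} \<in> E" "{x, v} \<in> E" "{v, u} \<in> E" "{v, w} \<in> E" "{v, x} \<in> E" "{w, u} \<in> E"
    using uw by (simp_all add: insert_commute)
qed

lemma config_darts: "(u, v) \<in> darts E" "(x, v) \<in> darts E" "(u, w) \<in> darts E"
  using config_edges uw neq by (simp_all add: darts_iff)

lemma in_V: "u \<in> V" "w \<in> V" "x \<in> V" "v \<in> V"
  using simple_graph_edge_in[OF simple config_edges(1)] simple_graph_edge_in[OF simple config_edges(2)]
    simple_graph_edge_in[OF simple config_edges(3)] by simp_all

lemma card_dist2_neighbourhood: "card {z. z \<noteq> v \<and> dist2_near E v z} \<le> 10"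
proof -
  let ?N = "\<lambda>y. {z. {z, y} \<in> E}"
  let ?B = "{u, w, x} \<union> (?N u - {v, w}) \<union> (?N w - {v, u}) \<union> (?N x - {v})"
  have "{z. z \<noteq> v \<and> dist2_near E v z} \<subseteq> ?B"
  proof
    fix z assume z: "z \<in> {z. z \<noteq> v \<and> dist2_near E v z}"
    show "z \<in> ?B"
    proof (cases "adj E v z")
      case True
      then have "z \<in> ?N v" unfolding adj_def by (simp add: insert_commute)
      then show ?thesis unfolding neighbours by blast
    next
      case False
      then obtain t where "{v, t} \<in> E" "{z, t} \<in> E"
        using z unfolding dist2_near_def adj_def by (auto simp: insert_commute)
      moreover from this(1) have "t \<in> {u, w, x}" using neighbours by (auto simp: insert_commute)
      ultimately show ?thesis using z by auto
    qed
  qed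
  moreover have "finite ?B" using finite_neighbours[OF simple] by simp
  ultimately have "card {z. z \<noteq> v \<and> dist2_near E v z} \<le> card ?B" by (simp add: card_mono)
  also have "\<dots> \<le> card {u, w, x} + card (?N u - {v, w}) + card (?N w - {v, u}) + card (?N x - {v})"
    by (meson add_mono card_Un_le le_trans order_refl)
  also have "\<dots> \<le> 3 + 2 + 2 + 3" \<comment> \<open>u and w are adjacent, so each has at most two further neighbours\<close>
  proof -
    have "card (?N y) \<le> 4" if "y \<in> V" for y
      using max_degree that unfolding max_degree_le_def degree_def by simp
    then have deg: "card (?N u) \<le> 4" "card (?N w) \<le> 4" "card (?N x) \<le> 4" using in_V by auto
    have "card {v, w} = 2" "card {v, u} = 2" using distinct by auto
    moreover have "{v, w} \<subseteq> ?N u" "{v, u} \<subseteq> ?N w" "v \<in> ?N x" using config_edges by (auto simp: insert_commute)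
    ultimately have "card (?N u - {v, w}) \<le> 2" "card (?N w - {v, u}) \<le> 2" "card (?N x - {v}) \<le> 3"
      using deg finite_neighbours[OF simple] by (simp_all add: card_Diff_subset)
    moreover have "card {u, w, x} \<le> 3" by (simp add: card_insert_le_m1)
    ultimately show ?thesis by simp
  qed
  finally show ?thesis by simp
qed
lemma dist2_reductionI:
  assumes "simple_graph V E'" "planar V E'" "max_degree_le V E' 4" "card E' < card E"
    "\<forall>y z. {y, z} \<in> E \<longrightarrow> y \<noteq> v \<longrightarrow> z \<noteq> v \<longrightarrow> {y, z} \<in> E'" "{u, w} \<in> E'" "{u, x} \<in> E'"
  shows "dist2_reduction V E v E'"
  unfolding dist2_reduction_def using assms dist2_near_star[OF assms(6,7)] neighbours by blast

lemma face_perm_triangle: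
  "face_perm \<rho> (u, v) = (v, w)" "face_perm \<rho> (v, w) = (w, u)" "face_perm \<rho> (w, u) = (u, v)"
  unfolding face_perm_def using rot by simp_all

lemma dist2_reduction_delete_edge:
  assumes ux: "{u, x} \<in> E"
  shows "dist2_reduction V E v (E - {{u, v}})"
proof (rule dist2_reductionI)
  have "\<rho> (u, v) \<noteq> (u, v)" using rotation_system_not_fixed[OF rotation config_darts(1) config_darts(3)] neq by simp
  moreover have "\<rho> (v, u) \<noteq> (v, u)" using rot distinct by auto
  moreover have "(v, u) \<notin> face_of \<rho> (u, v)"
    unfolding face_of_eq_orbit using orbit_period_3[of "face_perm \<rho>" "(u, v)"] face_perm_triangle distinct by auto
  moreover have "(u, v) \<in> {(a, b). adj (E - {{u, v}}) a b}\<^sup>*"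
    using config_edges uw distinct by (intro walk2_in_rtrancl[of u w]) (auto simp: doubleton_eq_iff)
  ultimately have "planar_embedding V (E - {{u, v}}) (delete_edge_rotation \<rho> u v)"
    using planar_embedding_delete_edge_iff[OF simple rotation config_edges(1)] planar by blast
  then show "planar V (E - {{u, v}})" unfolding planar_def by blast
next
  show "max_degree_le V (E - {{u, v}}) 4"
    using max_degree degree_mono[OF simple] unfolding max_degree_le_def by (meson Diff_subset le_trans)
  show "card (E - {{u, v}}) < card E"
    using card_Diff1_less[OF simple_graph_finite_edges[OF simple] config_edges(1)] .
  show "{u, w} \<in> E - {{u, v}}" "{u, x} \<in> E - {{u, v}}"
    using uw ux distinct by (auto simp: doubleton_eq_iff)
qed (use simple_graph_Diff[OF simple] in \<open>auto simp: doubleton_eq_iff\<close>)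

lemma planar_insert_chord:
  assumes ux: "{u, x} \<notin> E"
  obtains \<sigma> where "planar_embedding V (insert {u, x} E) \<sigma>"
    "\<sigma> (v, x) = (v, u)" "\<sigma> (v, u) = (v, w)" "\<sigma> (w, v) = (w, u)" "\<sigma> (u, w) = (u, v)"
    "\<sigma> (u, v) = (u, x)" "\<sigma> (x, u) = (x, v)"
proof -
  \<comment> \<open>(x, u) goes in just before (x, v) at x, so that u x v bounds a triangular face\<close>
  have "(x, v) \<in> \<rho> ` darts E"
    using rotation config_darts(2) unfolding rotation_system_def bij_betw_def by simp
  then obtain y where y: "y \<in> darts E" "\<rho> y = (x, v)" by (elim imageE) simp
  then have fst_y: "fst y = x" using rotation_system_fst[OF rotation y(1)] by simp
  let ?\<sigma> = "insert_edge_rotation \<rho> u x (u, v) y"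
  note \<sigma> = insert_edge_rotation_apply[OF neq(2) ux config_darts(1) fst_conv y(1) fst_y]
  have "d \<notin> {(u, v), y, (u, x), (x, u)}" if "fst d \<in> {v, w}" for d
    using that fst_y neq by (auto simp: prod_eq_iff)
  then have other: "?\<sigma> d = \<rho> d" if "fst d \<in> {v, w}" for d
    using \<sigma>(5) that by blast
  have val: "?\<sigma> (v, x) = (v, u)" "?\<sigma> (v, u) = (v, w)" "?\<sigma> (w, v) = (w, u)"
    "?\<sigma> (u, v) = (u, x)" "?\<sigma> (x, u) = (x, v)"
    using other[of "(v, x)"] other[of "(v, u)"] other[of "(w, v)"] \<sigma> y(2) rot by simp_all
  have "(u, w) \<notin> {(u, v), y, (u, x), (x, u)}" using fst_y neq by auto
  then have "?\<sigma> (u, w) = (u, v)" using \<sigma>(5) rot by simp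
  moreover have "(x, u) \<notin> face_of ?\<sigma> (u, x)"
  proof -
    have "face_perm ?\<sigma> (u, x) = (x, v)" "face_perm ?\<sigma> (x, v) = (v, u)" "face_perm ?\<sigma> (v, u) = (u, x)"
      using val unfolding face_perm_def by simp_all
    then show ?thesis unfolding face_of_eq_orbit using orbit_period_3[of "face_perm ?\<sigma>" "(u, x)"] neq by auto
  qed
  then have "planar_embedding V (insert {u, x} E) ?\<sigma>"
    using planar_embedding_insert_edge[OF simple planar in_V(1,3) neq(2) ux config_darts(1) _ y(1) fst_y]
      walk2_in_rtrancl[of u v E x] config_edges by simp
  ultimately show thesis using that val by blast
qed

lemma planar_reroute:
  assumes ux: "{u, x} \<notin> E"
  shows "planar V (insert {u, x} E - {{v, u}} - {{x, v}})"
proof -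
  let ?E1 = "insert {u, x} E"
  let ?E2 = "?E1 - {{v, u}}"
  obtain \<sigma> where pe1: "planar_embedding V ?E1 \<sigma>" and \<sigma>:
    "\<sigma> (v, x) = (v, u)" "\<sigma> (v, u) = (v, w)" "\<sigma> (w, v) = (w, u)" "\<sigma> (u, w) = (u, v)"
    "\<sigma> (u, v) = (u, x)" "\<sigma> (x, u) = (x, v)"
    using planar_insert_chord[OF ux] .
  let ?\<rho>2 = "delete_edge_rotation \<sigma> v u"
  have sg1: "simple_graph V ?E1" using simple in_V neq unfolding simple_graph_def by auto
  have rs1: "rotation_system ?E1 \<sigma>" using pe1 unfolding planar_embedding_def by simp
  have "face_perm \<sigma> (v, u) = (u, x)" "face_perm \<sigma> (u, x) = (x, v)" "face_perm \<sigma> (x, v) = (v, u)"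
    using \<sigma> unfolding face_perm_def by simp_all
  then have "(u, v) \<notin> face_of \<sigma> (v, u)"
    unfolding face_of_eq_orbit using orbit_period_3[of "face_perm \<sigma>" "(v, u)"] neq by auto
  moreover have "(v, u) \<in> {(a, b). adj ?E2 a b}\<^sup>*"
    using config_edges neq by (intro walk2_in_rtrancl[of v x]) (auto simp: doubleton_eq_iff)
  ultimately have pe2: "planar_embedding V ?E2 ?\<rho>2"
    using planar_embedding_delete_edge_iff[OF sg1 rs1, of v u] pe1 \<sigma>(2,5) config_edges(4) neq by auto
  have rs2: "rotation_system ?E2 ?\<rho>2" using pe2 unfolding planar_embedding_def by simp
  have \<rho>2: "?\<rho>2 (v, x) = (v, w)" "?\<rho>2 (w, v) = (w, u)" "?\<rho>2 (u, w) = (u, x)" "?\<rho>2 (x, u) = (x, v)"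
    using delete_edge_rotation_apply[of \<sigma> v u] \<sigma> neq by simp_all
  have "(x, v) \<in> darts ?E2" "(x, u) \<in> darts ?E2" using config_edges neq by (auto simp: darts_iff doubleton_eq_iff)
  then have "?\<rho>2 (x, v) \<noteq> (x, v)" using rotation_system_not_fixed[OF rs2] neq by blast
  moreover have "?\<rho>2 (v, x) \<noteq> (v, x)" using \<rho>2 neq by simp
  moreover have "(v, x) \<notin> face_of ?\<rho>2 (x, v)"
  proof -
    have "face_perm ?\<rho>2 (x, v) = (v, w)" "face_perm ?\<rho>2 (v, w) = (w, u)"
      "face_perm ?\<rho>2 (w, u) = (u, x)" "face_perm ?\<rho>2 (u, x) = (x, v)"
      using \<rho>2 unfolding face_perm_def by simp_all
    then show ?thesis
      unfolding face_of_eq_orbit using orbit_period_4[of "face_perm ?\<rho>2" "(x, v)"] neq by auto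
  qed
  moreover have "(x, v) \<in> {(a, b). adj (?E2 - {{x, v}}) a b}\<^sup>*"
    using config_edges uw neq by (intro walk3_in_rtrancl[of x u _ w]) (auto simp: doubleton_eq_iff insert_commute)
  moreover have "{x, v} \<in> ?E2" using config_edges neq by (auto simp: doubleton_eq_iff)
  ultimately have "planar_embedding V (?E2 - {{x, v}}) (delete_edge_rotation ?\<rho>2 x v)"
    using planar_embedding_delete_edge_iff[OF simple_graph_Diff[OF sg1] rs2] pe2 by blast
  then show ?thesis unfolding planar_def by blast
qed

lemma max_degree_reroute: "max_degree_le V (insert {u, x} E - {{v, u}} - {{x, v}}) 4"
  unfolding max_degree_le_def
proof
  let ?E3 = "insert {u, x} E - {{v, u}} - {{x, v}}"
  fix y assume y: "y \<in> V"
  have "degree ?E3 y \<le> degree E y"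
  proof (cases "y \<in> {u, x}")
    case True
    then obtain a where a: "{y, a} = {u, x}" by auto
    have "{z. {z, y} \<in> ?E3} \<subseteq> insert a ({z. {z, y} \<in> E} - {v})"
      using a True neq by (auto simp: doubleton_eq_iff)
    then show ?thesis using degree_le_if_neighbour_replaced[OF simple] config_edges True by auto
  next
    case False
    then have "?E3 - {{u, x}} \<subseteq> E" "{z. {z, y} \<in> ?E3} = {z. {z, y} \<in> ?E3 - {{u, x}}}"
      by (auto simp: doubleton_eq_iff)
    then show ?thesis using degree_mono[OF simple] unfolding degree_def by metis
  qed
  then show "degree ?E3 y \<le> 4" using max_degree y unfolding max_degree_le_def by fastforce
qed

lemma dist2_reduction_reroute:
  assumes ux: "{u, x} \<notin> E"
  shows "dist2_reduction V E v (insert {u, x} E - {{v, u}} - {{x, v}})"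
proof (rule dist2_reductionI)
  let ?E3 = "insert {u, x} E - {{v, u}} - {{x, v}}"
  show "simple_graph V ?E3" using simple in_V neq unfolding simple_graph_def by auto
  show "card ?E3 < card E"
  proof -
    have fin: "finite E" using simple_graph_finite_edges[OF simple] .
    have "card (insert {u, x} E) = Suc (card E)" using fin ux by simp
    moreover have "{v, u} \<in> insert {u, x} E" "{x, v} \<in> insert {u, x} E - {{v, u}}"
      using config_edges neq by (auto simp: doubleton_eq_iff)
    moreover have "0 < card E" using fin config_edges(4) card_gt_0_iff by blast
    ultimately show ?thesis using fin by (simp add: card_Diff_singleton)
  qed
qed (use planar_reroute[OF ux] max_degree_reroute uw neq in \<open>auto simp: doubleton_eq_iff\<close>)

end

theorem lemma7:
  fixes V :: "'a set" and E :: "'a set set" and rho :: "'a \<times> 'a \<Rightarrow> 'a \<times> 'a"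
  assumes "simple_graph V E"
    and "max_degree_le V E 4"
    and "planar_embedding V E rho"
    and "chi2 V E > 12"
    and "\<forall>(V' :: nat set) E'. simple_graph V' E' \<and> planar V' E' \<and> max_degree_le V' E' 4
           \<and> chi2 V' E' > 12 \<longrightarrow>
           \<not> (card V' < card V \<or> (card V' = card V \<and> card E' < card E))"
  shows "\<not> (\<exists>v\<in>V. degree E v = 3 \<and>
             (\<exists>f\<in>faces E rho. face_degree f = 3 \<and> incident_face v f))"
proof
  assume "\<exists>v\<in>V. degree E v = 3 \<and> (\<exists>f\<in>faces E rho. face_degree f = 3 \<and> incident_face v f)"
  then obtain v f where v: "v \<in> V" "degree E v = 3"
    and f: "f \<in> faces E rho" "face_degree f = 3" "incident_face v f" by blast
  have "rotation_system E rho" using assms(3) unfolding planar_embedding_def by simp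
  then obtain u w x where "{z. {z, v} \<in> E} = {u, w, x}" "distinct [u, w, x, v]" "{u, w} \<in> E"
    "rho (v, x) = (v, u)" "rho (v, u) = (v, w)" "rho (w, v) = (w, u)" "rho (u, w) = (u, v)"
    using degree3_vertex_on_triangle[OF assms(1) _ v(2) f] by blast
  then interpret degree3_triangle V E rho v u w x
    using assms(1-3) by unfold_locales
  have "card {z. z \<noteq> v \<and> dist2_near E v z} < 12" using card_dist2_neighbourhood by simp
  then have irreducible: "\<not> dist2_reduction V E v E'" for E'
    using minimal_counterexample_no_dist2_reduction[OF assms(5,1,4) v(1)] by blast
  show False
  proof (cases "{u, x} \<in> E")
    case True
    then show False using dist2_reduction_delete_edge irreducible by blast
  next
    case False
    then show False using dist2_reduction_reroute irreducible by blast
  qed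
qed

end
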